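(* Let $G=M(2)$, the universal covering group of the group of Euclidean motions of the plane. Realize it as $\mathbb R^3$ with coordinates $(t,n_1,n_2)$ and product $$(t,n_1,n_2)\cdot(t',n_1',n_2')=(t+t',\ n_1+n_1'\cos t+n_2'\sin t,\ n_2-n_1'\sin t+n_2'\cos t).$$ This is the realization $\mathfrak t\times\mathfrak n$ with $\mathfrak n=\mathrm{span}(X_2,X_3)$ and $\mathfrak t=\mathrm{span}(X_1)$, where $[X_1,X_2]=X_3$, $[X_1,X_3]=-X_2$, $[X_2,X_3]=0$. Then $\mathcal S_\sigma(G)$ coincides, as a topological vector space, with the usual Schwartz space $\mathcal S(\mathbb R^3)$.
   Context: For a connected simply connected solvable Lie group $G$ realized as $\mathfrak t\times\mathfrak n$ (with $\mathfrak n$ the nilradical and $N=\{0\}\times\mathfrak n$), fix Euclidean norms and let $\|\cdot\|_{\mathrm{op}}$ be the operator norm on $\mathfrak g$. Fix a symmetric compact neighbourhood $U$ of the identity. Let $|g|_G=\min\{j:g\in U^j\}$ and $|n|_N=\min\{j:n\in(U\cap N)^j\}$. Define $$\sigma(g)=\max(\|\mathrm{Ad}(g)\|_{\mathrm{op}},\|\mathrm{Ad}(g^{-1})\|_{\mathrm{op}})(1+|g|_G+|n|_N)\quad\text{for } g=(t,n).$$ For a basis $X_1,\dots,X_m$ of $\mathfrak g$, let $X^\alpha\phi(g)=\partial_s^\alpha\phi(g\exp(s_1X_1)\cdots\exp(s_mX_m))|_{s=0}$. $\mathcal S_\sigma(G)$ is the space of $\phi\in C^\infty(G)$ with $\sup_g|\sigma^kX^\alpha\phi|<\infty$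 for all $k\in\mathbb N$, $\alpha\in\mathbb N^m$, with the topology of these seminorms. $\mathcal S(\mathbb R^3)$ denotes the classical Schwartz space in the coordinates $(t,n_1,n_2)$. *)

theory Defs
  imports "HOL-Analysis.Analysis"
begin

type_synonym pt = "real \<times> real \<times> real"

definition gmult :: "pt \<Rightarrow> pt \<Rightarrow> pt" where
  "gmult g h = (case g of (t, n1, n2) \<Rightarrow> case h of (t', m1, m2) \<Rightarrow>
     (t + t', n1 + m1 * cos t + m2 * sin t, n2 - m1 * sin t + m2 * cos t))"

definition ginv :: "pt \<Rightarrow> pt" where
  "ginv g = (case g of (t, n1, n2) \<Rightarrow>
     (- t, - (n1 * cos t - n2 * sin t), - (n1 * sin t + n2 * cos t)))"

definition Nsub :: "pt set" where
  "Nsub = {g. fst g = 0}"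

text \<open>Adjoint representation: derivative at the identity of conjugation by g;
  the Lie algebra is identified with R^3 (tangent space at the identity) with
  the Euclidean norm.\<close>
definition Ad :: "pt \<Rightarrow> pt \<Rightarrow> pt" where
  "Ad g = frechet_derivative (\<lambda>h. gmult (gmult g h) (ginv g)) (at 0)"

fun setpow :: "pt set \<Rightarrow> nat \<Rightarrow> pt set" where
  "setpow U 0 = {0}"
| "setpow U (Suc j) = {gmult x y | x y. x \<in> setpow U j \<and> y \<in> U}"

definition lenG :: "pt set \<Rightarrow> pt \<Rightarrow> nat" where
  "lenG U g = (LEAST j. g \<in> setpow U j)"

definition lenN :: "pt set \<Rightarrow> pt \<Rightarrow> nat" where
  "lenN U n = (LEAST j. n \<in> setpow (U \<inter> Nsub) j)"

text \<open>sigma(g) for g = (t, n); |n|_N is the length of (0, n) in N.\<close>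
definition sigma :: "pt set \<Rightarrow> pt \<Rightarrow> real" where
  "sigma U g = max (onorm (Ad g)) (onorm (Ad (ginv g))) *
     (1 + real (lenG U g) + real (lenN U (0, snd g)))"

definition ev :: "nat \<Rightarrow> pt" where
  "ev i = (if i = 0 then (1, 0, 0) else if i = 1 then (0, 1, 0) else (0, 0, 1))"

definition pd :: "nat \<Rightarrow> (pt \<Rightarrow> complex) \<Rightarrow> pt \<Rightarrow> complex" where
  "pd i f x = vector_derivative (\<lambda>h. f (x + h *\<^sub>R ev i)) (at 0)"

fun pds :: "nat list \<Rightarrow> (pt \<Rightarrow> complex) \<Rightarrow> pt \<Rightarrow> complex" where
  "pds [] f = f"
| "pds (i # is) f = pd i (pds is f)"

definition smooth :: "(pt \<Rightarrow> complex) \<Rightarrow> bool" where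
  "smooth f \<longleftrightarrow> (\<forall>is. set is \<subseteq> {0, 1, 2} \<longrightarrow>
      continuous_on UNIV (pds is f) \<and>
      (\<forall>i \<in> {0, 1, 2}. \<forall>x. (\<lambda>h. pds is f (x + h *\<^sub>R ev i)) differentiable (at 0)))"

definition pdalpha :: "nat \<times> nat \<times> nat \<Rightarrow> (pt \<Rightarrow> complex) \<Rightarrow> pt \<Rightarrow> complex" where
  "pdalpha \<alpha> f = (case \<alpha> of (a1, a2, a3) \<Rightarrow>
     (pd 0 ^^ a1) ((pd 1 ^^ a2) ((pd 2 ^^ a3) f)))"

text \<open>Basis X1, X2, X3 with [X1,X2]=X3, [X1,X3]=-X2, [X2,X3]=0:
  exp(s X1) = (s,0,0), exp(s X2) = (0,s,0), exp(s X3) = (0,0,-s).\<close>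
definition expX :: "nat \<Rightarrow> real \<Rightarrow> pt" where
  "expX i s = (if i = 0 then (s, 0, 0) else if i = 1 then (0, s, 0) else (0, 0, - s))"

definition Eprod :: "pt \<Rightarrow> pt" where
  "Eprod s = (case s of (s1, s2, s3) \<Rightarrow>
     gmult (gmult (expX 0 s1) (expX 1 s2)) (expX 2 s3))"

definition Xalpha :: "nat \<times> nat \<times> nat \<Rightarrow> (pt \<Rightarrow> complex) \<Rightarrow> pt \<Rightarrow> complex" where
  "Xalpha \<alpha> \<phi> g = pdalpha \<alpha> (\<lambda>s. \<phi> (gmult g (Eprod s))) 0"

definition Ssigma :: "pt set \<Rightarrow> (pt \<Rightarrow> complex) set" where
  "Ssigma U = {\<phi>. smooth \<phi> \<and> (\<forall>k \<alpha>.
      bdd_above (range (\<lambda>g. sigma U g ^ k * norm (Xalpha \<alpha> \<phi> g))))}"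

definition sigma_seminorms :: "pt set \<Rightarrow> ((pt \<Rightarrow> complex) \<Rightarrow> real) set" where
  "sigma_seminorms U = {(\<lambda>\<phi>. SUP g. sigma U g ^ k * norm (Xalpha \<alpha> \<phi> g)) | k \<alpha>. True}"

definition monom :: "nat \<times> nat \<times> nat \<Rightarrow> pt \<Rightarrow> real" where
  "monom \<beta> x = (case \<beta> of (b1, b2, b3) \<Rightarrow> case x of (t, n1, n2) \<Rightarrow>
     t ^ b1 * n1 ^ b2 * n2 ^ b3)"

definition Schwartz :: "(pt \<Rightarrow> complex) set" where
  "Schwartz = {f. smooth f \<and> (\<forall>\<alpha> \<beta>.
      bdd_above (range (\<lambda>x. \<bar>monom \<beta> x\<bar> * norm (pdalpha \<alpha> f x))))}"

definition schwartz_seminorms :: "((pt \<Rightarrow> complex) \<Rightarrow> real) set" where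
  "schwartz_seminorms = {(\<lambda>f. SUP x. \<bar>monom \<beta> x\<bar> * norm (pdalpha \<alpha> f x)) | \<alpha> \<beta>. True}"

definition seminorm_open :: "('a \<Rightarrow> 'b::ab_group_add) set \<Rightarrow> (('a \<Rightarrow> 'b) \<Rightarrow> real) set \<Rightarrow> ('a \<Rightarrow> 'b) set \<Rightarrow> bool" where
  "seminorm_open S P V \<longleftrightarrow> V \<subseteq> S \<and> (\<forall>f \<in> V. \<exists>F \<epsilon>. finite F \<and> F \<subseteq> P \<and> \<epsilon> > 0 \<and>
      {g \<in> S. \<forall>p \<in> F. p (\<lambda>x. g x - f x) < \<epsilon>} \<subseteq> V)"

definition seminorm_topology :: "('a \<Rightarrow> 'b::ab_group_add) set \<Rightarrow> (('a \<Rightarrow> 'b) \<Rightarrow> real) set \<Rightarrow> ('a \<Rightarrow> 'b) topology" where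
  "seminorm_topology S P = topology (seminorm_open S P)"

end

theory Submission
  imports Defs
begin

(* The proof compares the two families of weighted derivatives pointwise.
   (1) Derivatives.  In coordinates the left-invariant field X_1 is d/dt, while (X_2, X_3) is
       (d/dn1, d/dn2) transformed by a t-dependent rotation.  Hence every X^alpha is a
       combination of partial derivatives with coefficients a cos t + b sin t, and conversely
       every partial derivative is such a combination of the X^gamma; this uses Clairaut's
       theorem (proved here for directional derivatives) and [X_2, X_3] = 0.  Operators of
       this shape are dominated pointwise by finitely many generators, uniformly in the function.
   (2) Weights.  Ad(g) is computed explicitly, and word lengths in U are comparable to the
       Euclidean norm, so 1 + |x| <~ sigma(x) <~ (1 + |x|)^2.  Hence sigma^k is dominated by
       polynomials and every monomial by a power of sigma.
   (3) By (1) and (2) each sigma-seminorm is dominated by finitely many Schwartz seminorms and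
       vice versa.  This gives equality of the spaces and, by a general lemma on topologies
       generated by mutually dominated families of seminorms, equality of the topologies. *)


lemma gmult_eq: "gmult g h = (fst g + fst h,
   fst (snd g) + fst (snd h) * cos (fst g) + snd (snd h) * sin (fst g),
   snd (snd g) - fst (snd h) * sin (fst g) + snd (snd h) * cos (fst g))"
  by (cases g; cases h) (auto simp: gmult_def)

lemma ginv_eq: "ginv g = (- fst g, - (fst (snd g) * cos (fst g) - snd (snd g) * sin (fst g)),
    - (fst (snd g) * sin (fst g) + snd (snd g) * cos (fst g)))"
  by (cases g) (auto simp: ginv_def)

lemma ev_simps: "ev 0 = (1,0,0)" "ev 1 = (0,1,0)" "ev (Suc 0) = (0,1,0)" "ev 2 = (0,0,1)"
  by (auto simp: ev_def)

lemma expX_simps: "expX 0 s = (s,0,0)" "expX 1 s = (0,s,0)" "expX (Suc 0) s = (0,s,0)" "expX 2 s = (0,0,-s)"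
  by (auto simp: expX_def)

lemma Eprod_eq: "Eprod s = (fst s, fst (snd s) * cos (fst s) - snd (snd s) * sin (fst s),
   - fst (snd s) * sin (fst s) - snd (snd s) * cos (fst s))"
  by (cases s) (auto simp: Eprod_def gmult_eq expX_simps algebra_simps)

lemma Eprod_zero: "Eprod (0,0,0) = (0,0,0)"
  by (simp add: Eprod_eq)

lemma gmult_zero_right: "gmult g (0,0,0) = g"
  by (simp add: gmult_eq)

text \<open>Moving the parameter of \<open>Eprod\<close> along a coordinate axis amounts to right
  multiplication by the corresponding one-parameter subgroup (for the first axis only at
  parameters on that axis, since \<open>exp(s X\<^sub>1)\<close> is applied first).\<close>

lemma Eprod_shift_t: "gmult g (Eprod (s + h, 0, 0)) = gmult (gmult g (Eprod (s,0,0))) (expX 0 h)"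
  by (simp add: gmult_eq Eprod_eq expX_simps)

lemma Eprod_shift_n:
  assumes "i \<in> {1,2}"
  shows "gmult g (Eprod (s + h *\<^sub>R ev i)) = gmult (gmult g (Eprod s)) (expX i h)"
  using assms by (auto simp: gmult_eq Eprod_eq expX_simps ev_simps sin_add cos_add algebra_simps)

text \<open>Indices \<open>i = 0, 1, 2\<close> refer to \<open>X\<^sub>1, X\<^sub>2, X\<^sub>3\<close> as in \<open>expX\<close>.  \<open>xdir i t\<close> is the value of
  the left-invariant field \<open>X\<^sub>i\<^sub>+\<^sub>1\<close> at a point with first coordinate \<open>t\<close>: right multiplication
  by \<open>exp(h X\<^sub>i\<^sub>+\<^sub>1)\<close> is translation along this vector.\<close>

definition xdir :: "nat \<Rightarrow> real \<Rightarrow> pt" where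
  "xdir i t = (if i = 0 then (1,0,0) else if i = 1 then (0, cos t, - sin t) else (0, - sin t, - cos t))"

lemma gmult_expX: "gmult x (expX i h) = x + h *\<^sub>R xdir i (fst x)"
  by (cases x) (simp add: gmult_eq expX_def xdir_def)

definition ddir :: "pt \<Rightarrow> (pt \<Rightarrow> complex) \<Rightarrow> pt \<Rightarrow> complex" where
  "ddir u f x = vector_derivative (\<lambda>h. f (x + h *\<^sub>R u)) (at 0)"

definition Xdiff :: "nat \<Rightarrow> (pt \<Rightarrow> complex) \<Rightarrow> pt \<Rightarrow> complex" where
  "Xdiff i f x = vector_derivative (\<lambda>h. f (gmult x (expX i h))) (at 0)"

lemma pd_ddir: "pd i = ddir (ev i)"
  by (auto simp: pd_def ddir_def fun_eq_iff)

lemma Xdiff_ddir: "Xdiff i f x = ddir (xdir i (fst x)) f x"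
  by (simp add: Xdiff_def ddir_def gmult_expX)

lemma Xdiff_0: "Xdiff 0 = pd 0"
  by (auto simp: fun_eq_iff Xdiff_ddir pd_ddir xdir_def ev_simps)

lemma pd_pow_Eprod_n:
  assumes "i \<in> {1,2}"
  shows "(pd i ^^ c) (\<lambda>s. \<Psi> (gmult g (Eprod s))) = (\<lambda>s. ((Xdiff i ^^ c) \<Psi>) (gmult g (Eprod s)))"
proof (induction c)
  case (Suc c)
  have step: "pd i (\<lambda>s. G (gmult g (Eprod s))) = (\<lambda>s. Xdiff i G (gmult g (Eprod s)))" for G
    by (rule ext) (simp only: pd_def Xdiff_def Eprod_shift_n[OF assms])
  show ?case
    by (simp only: funpow.simps o_apply Suc.IH step)
qed simp

lemma pd_pow_Eprod_t:
  assumes "\<forall>s. F (s,0,0) = \<Psi> (gmult g (Eprod (s,0,0)))"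
  shows "(pd 0 ^^ a) F (s,0,0) = ((Xdiff 0 ^^ a) \<Psi>) (gmult g (Eprod (s,0,0)))"
  using assms
proof (induction a arbitrary: s)
  case (Suc a)
  have line: "(s, 0, 0) + h *\<^sub>R ev 0 = (s + h, 0, 0)" for h :: real
    by (simp add: ev_simps)
  have "(pd 0 ^^ Suc a) F (s,0,0) = vector_derivative (\<lambda>h. (pd 0 ^^ a) F (s + h, 0, 0)) (at 0)"
    by (simp add: pd_def line)
  also have "\<dots> = vector_derivative (\<lambda>h. ((Xdiff 0 ^^ a) \<Psi>) (gmult (gmult g (Eprod (s,0,0))) (expX 0 h))) (at 0)"
    using Suc by (simp add: Eprod_shift_t)
  also have "\<dots> = Xdiff 0 ((Xdiff 0 ^^ a) \<Psi>) (gmult g (Eprod (s,0,0)))"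
    by (rule Xdiff_def[symmetric])
  finally show ?case by simp
qed simp

lemma Xalpha_Xdiff: "Xalpha (a,b,c) \<phi> = (Xdiff 0 ^^ a) ((Xdiff 1 ^^ b) ((Xdiff 2 ^^ c) \<phi>))"
proof
  fix g
  have "Xalpha (a,b,c) \<phi> g = (pd 0 ^^ a) ((pd 1 ^^ b) ((pd 2 ^^ c) (\<lambda>s. \<phi> (gmult g (Eprod s))))) (0,0,0)"
    unfolding Xalpha_def pdalpha_def zero_prod_def by simp
  also have "\<dots> = ((Xdiff 0 ^^ a) ((Xdiff 1 ^^ b) ((Xdiff 2 ^^ c) \<phi>))) (gmult g (Eprod (0,0,0)))"
    unfolding pd_pow_Eprod_n[of 2, OF insertI2[OF insertI1]] pd_pow_Eprod_n[of 1, OF insertI1]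
    by (rule pd_pow_Eprod_t) simp
  finally show "Xalpha (a,b,c) \<phi> g = (Xdiff 0 ^^ a) ((Xdiff 1 ^^ b) ((Xdiff 2 ^^ c) \<phi>)) g"
    by (simp add: Eprod_zero gmult_zero_right)
qed

section \<open>Calculus on \<open>\<real>\<^sup>3\<close>: symmetry of mixed partials and a directional chain rule\<close>

lemma has_vector_derivative_translate:
  fixes F :: "real \<Rightarrow> 'a::real_normed_vector"
  assumes "(F has_vector_derivative D) (at 0)"
  shows "((\<lambda>s. F (s - s0)) has_vector_derivative D) (at s0)"
proof -
  have "((\<lambda>s. s - s0) has_vector_derivative 1) (at s0)"
    by (auto intro!: derivative_eq_intros)
  from vector_diff_chain_at[OF this] assms show ?thesis
    by (simp add: o_def)
qed

lemma ddir_along_line: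
  fixes f :: "pt \<Rightarrow> complex"
  assumes "(\<lambda>h. f ((x + s0 *\<^sub>R u) + h *\<^sub>R u)) differentiable (at 0)"
  shows "((\<lambda>s. f (x + s *\<^sub>R u)) has_vector_derivative ddir u f (x + s0 *\<^sub>R u)) (at s0)"
proof -
  have "((\<lambda>h. f ((x + s0 *\<^sub>R u) + h *\<^sub>R u)) has_vector_derivative ddir u f (x + s0 *\<^sub>R u)) (at 0)"
    using assms by (simp add: ddir_def vector_derivative_works)
  from has_vector_derivative_translate[OF this, of s0] show ?thesis
    by (simp add: algebra_simps)
qed

lemma mean_value_linear_deviation:
  fixes g :: "real \<Rightarrow> 'a::real_normed_vector"
  assumes h: "0 \<le> h" and d: "\<And>s. s \<in> {0..h} \<Longrightarrow> (g has_vector_derivative g' s) (at s)"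
    and b: "\<And>s. s \<in> {0..h} \<Longrightarrow> norm (g' s - c) \<le> M"
  shows "norm (g h - g 0 - h *\<^sub>R c) \<le> h * M"
proof -
  define f where "f s = g s - s *\<^sub>R c" for s
  have df: "(f has_derivative (\<lambda>d. d *\<^sub>R (g' s - c))) (at s within {0..h})" if "s \<in> {0..h}" for s
  proof -
    have "(f has_vector_derivative (g' s - c)) (at s)"
      unfolding f_def using d[OF that] by (auto intro!: derivative_eq_intros)
    then show ?thesis
      by (simp add: has_vector_derivative_def has_derivative_at_withinI)
  qed
  have on: "onorm (\<lambda>d. d *\<^sub>R (g' s - c)) \<le> M" if "s \<in> {0..h}" for s
  proof (rule onorm_le)
    fix x :: real
    have "\<bar>x\<bar> * norm (g' s - c) \<le> \<bar>x\<bar> * M" by (rule mult_left_mono[OF b[OF that]]) simp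
    then show "norm (x *\<^sub>R (g' s - c)) \<le> M * norm x" by (simp add: mult.commute)
  qed
  have "norm (f h - f 0) \<le> M * norm (h - 0)"
    by (rule differentiable_bound[OF convex_real_interval(5) df on]) (use h in auto)
  then show ?thesis using h by (simp add: f_def mult.commute algebra_simps)
qed

lemma second_difference_estimate:
  fixes f :: "pt \<Rightarrow> complex"
  assumes du: "\<forall>y. (\<lambda>h. f (y + h *\<^sub>R u)) differentiable (at 0)"
    and duv: "\<forall>y. (\<lambda>h. ddir u f (y + h *\<^sub>R v)) differentiable (at 0)"
    and h: "0 \<le> h"
    and close: "\<forall>s\<in>{0..h}. \<forall>r\<in>{0..h}. norm (ddir v (ddir u f) (x + s *\<^sub>R u + r *\<^sub>R v) - A) \<le> e"
  shows "norm ((f (x + h *\<^sub>R v + h *\<^sub>R u) - f (x + h *\<^sub>R u)) - (f (x + h *\<^sub>R v) - f x) - (h * h) *\<^sub>R A)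
    \<le> h * (h * e)"
proof -
  define g where "g s = f ((x + h *\<^sub>R v) + s *\<^sub>R u) - f (x + s *\<^sub>R u)" for s
  define g' where "g' s = ddir u f ((x + h *\<^sub>R v) + s *\<^sub>R u) - ddir u f (x + s *\<^sub>R u)" for s
  have gd: "(g has_vector_derivative g' s) (at s)" for s
    unfolding g_def g'_def
    by (intro has_vector_derivative_diff ddir_along_line) (rule du[rule_format])+
  have gb: "norm (g' s - h *\<^sub>R A) \<le> h * e" if s: "s \<in> {0..h}" for s
  proof -
    define k where "k r = ddir u f ((x + s *\<^sub>R u) + r *\<^sub>R v)" for r
    have kd: "(k has_vector_derivative ddir v (ddir u f) ((x + s *\<^sub>R u) + r *\<^sub>R v)) (at r)" for r
      unfolding k_def by (rule ddir_along_line) (rule duv[rule_format])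
    have "norm (k h - k 0 - h *\<^sub>R A) \<le> h * e"
      by (rule mean_value_linear_deviation[OF h kd]) (use close s in auto)
    moreover have "k h - k 0 = g' s"
      by (simp add: k_def g'_def algebra_simps)
    ultimately show ?thesis by simp
  qed
  have "norm (g h - g 0 - h *\<^sub>R (h *\<^sub>R A)) \<le> h * (h * e)"
    by (rule mean_value_linear_deviation[OF h gd gb])
  then show ?thesis by (simp add: g_def algebra_simps)
qed

lemma continuous_on_small_parallelogram:
  fixes F :: "pt \<Rightarrow> complex"
  assumes "isCont F x" "e > 0"
  obtains h where "h > 0" "\<forall>s\<in>{0..h}. \<forall>r\<in>{0..h}. norm (F (x + s *\<^sub>R a + r *\<^sub>R b) - F x) \<le> e"
proof -
  obtain \<delta> where \<delta>: "\<delta> > 0" "\<And>y. dist y x < \<delta> \<Longrightarrow> dist (F y) (F x) < e"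
    using assms unfolding continuous_at_eps_delta by blast
  define h where "h = \<delta> / (2 * (1 + norm a + norm b))"
  have pos: "0 < 2 * (1 + norm a + norm b)" by (intro mult_pos_pos add_pos_nonneg) auto
  have h: "h > 0" using \<delta> pos by (simp add: h_def)
  have small: "h * (norm a + norm b) < \<delta>"
  proof -
    have "h * (norm a + norm b) = \<delta> * ((norm a + norm b) / (2 * (1 + norm a + norm b)))"
      by (simp add: h_def)
    also have "\<dots> < \<delta> * 1"
      using pos by (intro mult_strict_left_mono \<delta>(1)) (simp add: divide_less_eq)
    finally show ?thesis by simp
  qed
  have "norm (F (x + s *\<^sub>R a + r *\<^sub>R b) - F x) \<le> e" if "s \<in> {0..h}" "r \<in> {0..h}" for s r
  proof -
    have "dist (x + s *\<^sub>R a + r *\<^sub>R b) x \<le> s * norm a + r * norm b"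
      using that by (auto simp: dist_norm intro!: order.trans[OF norm_triangle_ineq])
    also have "\<dots> \<le> h * norm a + h * norm b"
      using that by (intro add_mono mult_right_mono) auto
    finally have "dist (x + s *\<^sub>R a + r *\<^sub>R b) x < \<delta>" using small by (simp add: algebra_simps)
    from \<delta>(2)[OF this] show ?thesis by (simp add: dist_norm)
  qed
  with h that show ?thesis by blast
qed

text \<open>Clairaut's theorem for directional derivatives: both second differences agree,
  and each is \<open>h\<^sup>2\<close> times a mixed derivative up to \<open>o(h\<^sup>2)\<close>.\<close>

lemma ddir_commute:
  fixes f :: "pt \<Rightarrow> complex"
  assumes du: "\<forall>y. (\<lambda>h. f (y + h *\<^sub>R u)) differentiable (at 0)"
    and dv: "\<forall>y. (\<lambda>h. f (y + h *\<^sub>R v)) differentiable (at 0)"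
    and duv: "\<forall>y. (\<lambda>h. ddir u f (y + h *\<^sub>R v)) differentiable (at 0)"
    and dvu: "\<forall>y. (\<lambda>h. ddir v f (y + h *\<^sub>R u)) differentiable (at 0)"
    and cuv: "isCont (ddir v (ddir u f)) x"
    and cvu: "isCont (ddir u (ddir v f)) x"
  shows "ddir v (ddir u f) x = ddir u (ddir v f) x"
proof (rule ccontr)
  define A where "A = ddir v (ddir u f) x"
  define B where "B = ddir u (ddir v f) x"
  assume "ddir v (ddir u f) x \<noteq> ddir u (ddir v f) x"
  then have AB: "norm (A - B) > 0" by (simp add: A_def B_def)
  define e where "e = norm (A - B) / 4"
  have e: "e > 0" using AB by (simp add: e_def)
  obtain h1 where h1: "h1 > 0"
    "\<forall>s\<in>{0..h1}. \<forall>r\<in>{0..h1}. norm (ddir v (ddir u f) (x + s *\<^sub>R u + r *\<^sub>R v) - A) \<le> e"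
    using continuous_on_small_parallelogram[OF cuv e] unfolding A_def by blast
  obtain h2 where h2: "h2 > 0"
    "\<forall>s\<in>{0..h2}. \<forall>r\<in>{0..h2}. norm (ddir u (ddir v f) (x + s *\<^sub>R v + r *\<^sub>R u) - B) \<le> e"
    using continuous_on_small_parallelogram[OF cvu e] unfolding B_def by blast
  define h where "h = min h1 h2"
  have h: "h > 0" using h1 h2 by (simp add: h_def)
  define D where "D = (f (x + h *\<^sub>R v + h *\<^sub>R u) - f (x + h *\<^sub>R u)) - (f (x + h *\<^sub>R v) - f x)"
  have EA: "norm (D - (h * h) *\<^sub>R A) \<le> h * (h * e)"
    using second_difference_estimate[OF du duv less_imp_le[OF h], of x A e] h1(2)
    by (simp add: D_def h_def)
  have EB: "norm (D - (h * h) *\<^sub>R B) \<le> h * (h * e)"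
    using second_difference_estimate[OF dv dvu less_imp_le[OF h], of x B e] h2(2)
    by (simp add: D_def h_def algebra_simps)
  have "norm ((h * h) *\<^sub>R (A - B)) \<le> norm (D - (h * h) *\<^sub>R B) + norm (D - (h * h) *\<^sub>R A)"
    by (rule order.trans[OF _ norm_triangle_ineq4]) (simp add: algebra_simps)
  also have "\<dots> \<le> (h * h) * (norm (A - B) / 2)" using EA EB by (simp add: e_def)
  finally have "norm (A - B) \<le> norm (A - B) / 2"
    using h by (simp add: mult_le_cancel_left_pos)
  then show False using AB by simp
qed

lemma continuous_slice_scaleR:
  fixes G :: "pt \<Rightarrow> complex"
  assumes c: "continuous_on UNIV G"
  shows "continuous (at (p0,q0) within UNIV \<times> UNIV) (\<lambda>(p,q). blinfun_scaleR_left (G (t,p,q)))"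
proof -
  have "continuous_on UNIV (\<lambda>(p::real,q::real). (t,p,q))"
    by (auto intro!: continuous_intros simp: split_beta)
  then have "continuous_on UNIV (\<lambda>(p::real,q::real). G (t,p,q))"
    using continuous_on_compose[OF _ continuous_on_subset[OF c]] by (simp add: o_def split_beta)
  then have "continuous_on UNIV (\<lambda>(p::real,q::real). blinfun_scaleR_left (G (t,p,q)))"
    using continuous_on_compose[OF _ bounded_linear.continuous_on[OF bounded_linear_blinfun_scaleR_left continuous_on_id]]
    by (simp add: o_def split_beta)
  moreover have "(\<lambda>(p,q). blinfun_scaleR_left (G (t,p,q))) = (\<lambda>z. blinfun_scaleR_left (G (t,z)))"
    by (auto simp: fun_eq_iff)
  ultimately show ?thesis by (simp add: continuous_on_eq_continuous_at)
qed

lemma ddir_n_plane: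
  fixes f :: "pt \<Rightarrow> complex"
  assumes d1: "\<forall>y. (\<lambda>h. f (y + h *\<^sub>R ev 1)) differentiable (at 0)"
    and d2: "\<forall>y. (\<lambda>h. f (y + h *\<^sub>R ev 2)) differentiable (at 0)"
    and c: "continuous_on UNIV (pd 2 f)"
  shows "((\<lambda>h. f (x + h *\<^sub>R (0,a,b))) has_vector_derivative (a *\<^sub>R pd 1 f x + b *\<^sub>R pd 2 f x)) (at 0)"
proof -
  obtain t n1 n2 where x: "x = (t,n1,n2)" by (cases x)
  define F where "F p q = f (t,p,q)" for p q
  have fx: "((\<lambda>p. F p n2) has_derivative (\<lambda>d. d *\<^sub>R pd 1 f x)) (at n1 within UNIV)"
  proof -
    have "((\<lambda>s. f ((t,0,n2) + s *\<^sub>R ev 1)) has_vector_derivative ddir (ev 1) f ((t,0,n2) + n1 *\<^sub>R ev 1)) (at n1)"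
      by (rule ddir_along_line) (rule d1[rule_format])
    then show ?thesis by (simp add: F_def ev_simps has_vector_derivative_def x pd_ddir)
  qed
  have fy: "((\<lambda>q'. F p q') has_derivative blinfun_apply (blinfun_scaleR_left (pd 2 f (t,p,q)))) (at q within UNIV)"
    if "p \<in> UNIV" "q \<in> UNIV" for p q
  proof -
    have "((\<lambda>s. f ((t,p,0) + s *\<^sub>R ev 2)) has_vector_derivative ddir (ev 2) f ((t,p,0) + q *\<^sub>R ev 2)) (at q)"
      by (rule ddir_along_line) (rule d2[rule_format])
    then show ?thesis by (simp add: F_def ev_simps has_vector_derivative_def pd_ddir)
  qed
  have cont: "continuous (at (n1,n2) within UNIV \<times> UNIV) (\<lambda>(p,q). blinfun_scaleR_left (pd 2 f (t,p,q)))"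
    by (rule continuous_slice_scaleR[OF c])
  define L where "L = (\<lambda>(tx::real, ty::real). tx *\<^sub>R pd 1 f x + blinfun_apply (blinfun_scaleR_left (pd 2 f (t,n1,n2))) ty)"
  have H: "((\<lambda>(p,q). F p q) has_derivative L) (at ((\<lambda>h::real. (n1 + h * a, n2 + h * b)) 0))"
    using has_derivative_partialsI[OF fx fy cont] by (simp add: L_def)
  have P: "((\<lambda>h::real. (n1 + h * a, n2 + h * b)) has_derivative (\<lambda>h. (h*a, h*b))) (at 0)"
    by (auto intro!: derivative_eq_intros)
  have e1: "((\<lambda>(p,q). F p q) \<circ> (\<lambda>h::real. (n1 + h * a, n2 + h * b))) = (\<lambda>h. f (x + h *\<^sub>R (0,a,b)))"
    by (auto simp: fun_eq_iff x F_def algebra_simps)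
  have e2: "L \<circ> (\<lambda>h. (h*a, h*b)) = (\<lambda>h. h *\<^sub>R (a *\<^sub>R pd 1 f x + b *\<^sub>R pd 2 f x))"
    by (auto simp: fun_eq_iff x L_def algebra_simps)
  show ?thesis using diff_chain_at[OF P H] unfolding e1 e2 has_vector_derivative_def .
qed

section \<open>Operators with trigonometric coefficients\<close>

text \<open>Coefficients of the form \<open>a cos t + b sin t\<close>; they are closed under \<open>\<partial>\<^sub>t\<close>.\<close>

definition trig :: "real \<Rightarrow> real \<Rightarrow> real \<Rightarrow> real" where
  "trig a b t = a * cos t + b * sin t"

lemma trig_bound: "\<bar>trig a b t\<bar> \<le> \<bar>a\<bar> + \<bar>b\<bar>"
proof -
  have "\<bar>a * cos t\<bar> \<le> \<bar>a\<bar>" "\<bar>b * sin t\<bar> \<le> \<bar>b\<bar>"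
    using abs_cos_le_one[of t] abs_sin_le_one[of t] by (simp_all add: abs_mult mult_left_le)
  then show ?thesis unfolding trig_def by linarith
qed

lemma trig_line_deriv:
  "((\<lambda>h. trig a b (fst (x + h *\<^sub>R ev i))) has_real_derivative (fst (ev i) * trig b (-a) (fst x))) (at 0)"
  by (cases "i = 0") (auto simp: ev_def trig_def intro!: derivative_eq_intros)

lemma pd_has: "(\<lambda>h. F (x + h *\<^sub>R ev i)) differentiable (at 0) \<Longrightarrow>
   ((\<lambda>h. F (x + h *\<^sub>R ev i)) has_vector_derivative pd i F x) (at 0)"
  by (simp add: pd_def vector_derivative_works)

lemma pd_add:
  assumes "(\<lambda>h. F (x + h *\<^sub>R ev i)) differentiable (at 0)" "(\<lambda>h. G (x + h *\<^sub>R ev i)) differentiable (at 0)"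
  shows "pd i (\<lambda>y. F y + G y) x = pd i F x + pd i G x"
  unfolding pd_def[of i "\<lambda>y. F y + G y"]
  by (rule vector_derivative_at, rule has_vector_derivative_add[OF pd_has[OF assms(1)] pd_has[OF assms(2)]])

lemma pd_diff:
  assumes "(\<lambda>h. F (x + h *\<^sub>R ev i)) differentiable (at 0)" "(\<lambda>h. G (x + h *\<^sub>R ev i)) differentiable (at 0)"
  shows "pd i (\<lambda>y. F y - G y) x = pd i F x - pd i G x"
  unfolding pd_def[of i "\<lambda>y. F y - G y"]
  by (rule vector_derivative_at, rule has_vector_derivative_diff[OF pd_has[OF assms(1)] pd_has[OF assms(2)]])

lemma pd_trig_scale_has:
  assumes "(\<lambda>h. F (x + h *\<^sub>R ev i)) differentiable (at 0)"
  shows "((\<lambda>h. trig a b (fst (x + h *\<^sub>R ev i)) *\<^sub>R F (x + h *\<^sub>R ev i)) has_vector_derivative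
     (fst (ev i) * trig b (-a) (fst x)) *\<^sub>R F x + trig a b (fst x) *\<^sub>R pd i F x) (at 0)"
  using has_vector_derivative_scaleR[OF trig_line_deriv pd_has[OF assms]] by (simp add: add.commute)

lemma pd_trig_scale:
  assumes "(\<lambda>h. F (x + h *\<^sub>R ev i)) differentiable (at 0)"
  shows "pd i (\<lambda>y. trig a b (fst y) *\<^sub>R F y) x =
     (fst (ev i) * trig b (-a) (fst x)) *\<^sub>R F x + trig a b (fst x) *\<^sub>R pd i F x"
  unfolding pd_def[of i "\<lambda>y. trig a b (fst y) *\<^sub>R F y"]
  by (rule vector_derivative_at[OF pd_trig_scale_has[OF assms]])

type_synonym op = "(pt \<Rightarrow> complex) \<Rightarrow> pt \<Rightarrow> complex"

inductive_set trig_span :: "op set \<Rightarrow> op set" for B where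
  base: "A \<in> B \<Longrightarrow> A \<in> trig_span B"
| add: "A \<in> trig_span B \<Longrightarrow> A' \<in> trig_span B \<Longrightarrow> (\<lambda>\<phi> x. A \<phi> x + A' \<phi> x) \<in> trig_span B"
| scale: "A \<in> trig_span B \<Longrightarrow> (\<lambda>\<phi> x. trig a b (fst x) *\<^sub>R A \<phi> x) \<in> trig_span B"

definition represented :: "op set \<Rightarrow> op \<Rightarrow> bool" where
  "represented B T \<longleftrightarrow> (\<exists>A\<in>trig_span B. \<forall>\<phi>. smooth \<phi> \<longrightarrow> T \<phi> = A \<phi>)"

lemma represented_span: "A \<in> trig_span B \<Longrightarrow> represented B A"
  unfolding represented_def by blast

lemma represented_trans:
  assumes T: "represented B' T" and B': "\<And>A. A \<in> B' \<Longrightarrow> represented B A"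
  shows "represented B T"
proof -
  have "represented B A" if "A \<in> trig_span B'" for A
    using that
  proof (induction A rule: trig_span.induct)
    case (add A A')
    then obtain C C' where "C \<in> trig_span B" "C' \<in> trig_span B"
      "\<forall>\<phi>. smooth \<phi> \<longrightarrow> A \<phi> = C \<phi>" "\<forall>\<phi>. smooth \<phi> \<longrightarrow> A' \<phi> = C' \<phi>"
      unfolding represented_def by blast
    then show ?case unfolding represented_def
      by (intro bexI[of _ "\<lambda>\<phi> x. C \<phi> x + C' \<phi> x"] trig_span.add) auto
  next
    case (scale A a b)
    then obtain C where "C \<in> trig_span B" "\<forall>\<phi>. smooth \<phi> \<longrightarrow> A \<phi> = C \<phi>"
      unfolding represented_def by blast
    then show ?case unfolding represented_def by (intro bexI[OF _ trig_span.scale]) auto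
  qed (rule B')
  with T show ?thesis unfolding represented_def by fastforce
qed

lemma represented_compose:
  assumes "represented B T" and D: "\<And>A. A \<in> trig_span B \<Longrightarrow> represented B (\<lambda>\<phi>. D (A \<phi>))"
  shows "represented B (\<lambda>\<phi>. D (T \<phi>))"
proof -
  obtain A where A: "A \<in> trig_span B" "\<forall>\<phi>. smooth \<phi> \<longrightarrow> T \<phi> = A \<phi>"
    using assms(1) unfolding represented_def by blast
  with D[OF A(1)] show ?thesis unfolding represented_def by auto
qed

lemma represented_iterate:
  assumes "represented B T" and D: "\<And>A. A \<in> trig_span B \<Longrightarrow> represented B (\<lambda>\<phi>. D (A \<phi>))"
  shows "represented B (\<lambda>\<phi>. (D ^^ n) (T \<phi>))"
  by (induction n) (auto intro: represented_compose[OF _ D] simp: assms(1))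

lemma represented_pd:
  assumes "A \<in> trig_span B"
    and gen: "\<And>A. A \<in> B \<Longrightarrow> represented B (\<lambda>\<phi>. pd i (A \<phi>))"
    and reg: "\<And>A \<phi> x. A \<in> trig_span B \<Longrightarrow> smooth \<phi> \<Longrightarrow> (\<lambda>h. A \<phi> (x + h *\<^sub>R ev i)) differentiable (at 0)"
  shows "represented B (\<lambda>\<phi>. pd i (A \<phi>))"
  using assms(1)
proof (induction A rule: trig_span.induct)
  case (base A)
  then show ?case by (rule gen)
next
  case (add A A')
  then obtain C C' where C: "C \<in> trig_span B" "C' \<in> trig_span B"
    "\<And>\<phi>. smooth \<phi> \<Longrightarrow> pd i (A \<phi>) = C \<phi>" "\<And>\<phi>. smooth \<phi> \<Longrightarrow> pd i (A' \<phi>) = C' \<phi>"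
    unfolding represented_def by blast
  have "pd i (\<lambda>x. A \<phi> x + A' \<phi> x) = (\<lambda>x. C \<phi> x + C' \<phi> x)" if s: "smooth \<phi>" for \<phi>
    using pd_add[OF reg[OF add.hyps(1) s] reg[OF add.hyps(2) s]] C(3,4)[OF s] by auto
  with C(1,2) show ?case unfolding represented_def
    by (intro bexI[of _ "\<lambda>\<phi> x. C \<phi> x + C' \<phi> x"] trig_span.add) auto
next
  case (scale A a b)
  then obtain C where C: "C \<in> trig_span B" "\<And>\<phi>. smooth \<phi> \<Longrightarrow> pd i (A \<phi>) = C \<phi>"
    unfolding represented_def by blast
  have coeff: "fst (ev i) * trig b (-a) t = trig (fst (ev i) * b) (fst (ev i) * (-a)) t" for t
    by (simp add: trig_def algebra_simps)
  define C' where "C' = (\<lambda>\<phi> x. trig (fst (ev i) * b) (fst (ev i) * (-a)) (fst x) *\<^sub>R A \<phi> x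
    + trig a b (fst x) *\<^sub>R C \<phi> x)"
  have "C' \<in> trig_span B" unfolding C'_def by (intro trig_span.add trig_span.scale scale.hyps C(1))
  moreover have "pd i (\<lambda>x. trig a b (fst x) *\<^sub>R A \<phi> x) = C' \<phi>" if s: "smooth \<phi>" for \<phi>
  proof
    fix x
    show "pd i (\<lambda>x. trig a b (fst x) *\<^sub>R A \<phi> x) x = C' \<phi> x"
      unfolding pd_trig_scale[OF reg[OF scale.hyps s]] C(2)[OF s] coeff C'_def ..
  qed
  ultimately show ?case unfolding represented_def by blast
qed

definition dominated :: "op \<Rightarrow> ('i \<Rightarrow> op) \<Rightarrow> bool" where
  "dominated A T \<longleftrightarrow> (\<exists>L C. C \<ge> 0 \<and>
     (\<forall>\<phi>. smooth \<phi> \<longrightarrow> (\<forall>x. norm (A \<phi> x) \<le> C * (\<Sum>\<beta>\<leftarrow>L. norm (T \<beta> \<phi> x)))))"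

lemma dominated_self: "dominated (T \<beta>) T"
  unfolding dominated_def by (intro exI[of _ "[\<beta>]"] exI[of _ 1]) auto

lemma dominated_add:
  assumes "dominated A T" "dominated A' T"
  shows "dominated (\<lambda>\<phi> x. A \<phi> x + A' \<phi> x) T"
proof -
  obtain L C L' C' where C: "C \<ge> 0" "C' \<ge> 0"
    "\<And>\<phi> x. smooth \<phi> \<Longrightarrow> norm (A \<phi> x) \<le> C * (\<Sum>\<beta>\<leftarrow>L. norm (T \<beta> \<phi> x))"
    "\<And>\<phi> x. smooth \<phi> \<Longrightarrow> norm (A' \<phi> x) \<le> C' * (\<Sum>\<beta>\<leftarrow>L'. norm (T \<beta> \<phi> x))"
    using assms unfolding dominated_def by blast
  have "norm (A \<phi> x + A' \<phi> x) \<le> (C + C') * (\<Sum>\<beta>\<leftarrow>L @ L'. norm (T \<beta> \<phi> x))"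
    if "smooth \<phi>" for \<phi> x
  proof -
    define S S' where "S = (\<Sum>\<beta>\<leftarrow>L. norm (T \<beta> \<phi> x))" and "S' = (\<Sum>\<beta>\<leftarrow>L'. norm (T \<beta> \<phi> x))"
    have "S \<ge> 0" "S' \<ge> 0" unfolding S_def S'_def by (auto intro!: sum_list_nonneg)
    have "norm (A \<phi> x + A' \<phi> x) \<le> C * S + C' * S'"
      using C(3,4)[OF that, of x] norm_triangle_ineq[of "A \<phi> x" "A' \<phi> x"]
      unfolding S_def S'_def by linarith
    also have "\<dots> \<le> (C + C') * (S + S')"
      using \<open>S \<ge> 0\<close> \<open>S' \<ge> 0\<close> C(1,2) by (simp add: algebra_simps add_increasing2)
    finally show ?thesis by (simp add: S_def S'_def)
  qed
  with C(1,2) show ?thesis unfolding dominated_def by (intro exI[of _ "L @ L'"] exI[of _ "C + C'"]) auto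
qed

lemma dominated_scale:
  assumes "dominated A T"
  shows "dominated (\<lambda>\<phi> x. trig a b (fst x) *\<^sub>R A \<phi> x) T"
proof -
  obtain L C where C: "C \<ge> 0" "\<And>\<phi> x. smooth \<phi> \<Longrightarrow> norm (A \<phi> x) \<le> C * (\<Sum>\<beta>\<leftarrow>L. norm (T \<beta> \<phi> x))"
    using assms unfolding dominated_def by blast
  have "norm (trig a b (fst x) *\<^sub>R A \<phi> x) \<le> ((\<bar>a\<bar> + \<bar>b\<bar>) * C) * (\<Sum>\<beta>\<leftarrow>L. norm (T \<beta> \<phi> x))"
    if "smooth \<phi>" for \<phi> x
    using mult_mono[OF trig_bound C(2)[OF that]] C(1) by (simp add: mult.assoc)
  with C(1) show ?thesis unfolding dominated_def by (intro exI[of _ L] exI[of _ "(\<bar>a\<bar> + \<bar>b\<bar>) * C"]) auto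
qed

lemma represented_dominated:
  assumes "represented B A" and gen: "\<And>A'. A' \<in> B \<Longrightarrow> dominated A' T"
  shows "dominated A T"
proof -
  obtain A' where A': "A' \<in> trig_span B" "\<forall>\<phi>. smooth \<phi> \<longrightarrow> A \<phi> = A' \<phi>"
    using assms(1) unfolding represented_def by blast
  have "dominated A' T"
    using A'(1) by induction (auto intro: gen dominated_add dominated_scale)
  with A'(2) show ?thesis unfolding dominated_def by simp
qed

lemma smooth_pds:
  "smooth \<phi> \<Longrightarrow> set w \<subseteq> {0,1,2} \<Longrightarrow> continuous_on UNIV (pds w \<phi>) \<and>
     (\<forall>i\<in>{0,1,2}. \<forall>x. (\<lambda>h. pds w \<phi> (x + h *\<^sub>R ev i)) differentiable (at 0))"
  unfolding smooth_def by blast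

lemma smooth_differentiable:
  assumes "smooth F" "i \<in> {0,1,2}"
  shows "(\<lambda>h. F (y + h *\<^sub>R ev i)) differentiable (at 0)"
proof -
  have "set ([] :: nat list) \<subseteq> {0,1,2}" by simp
  from conjunct2[OF smooth_pds[OF assms(1) this]] assms(2)
  have "(\<lambda>h. pds [] F (y + h *\<^sub>R ev i)) differentiable (at 0)" by blast
  then show ?thesis by simp
qed

definition partial_ops :: "op set" where
  "partial_ops = {pds w | w. set w \<subseteq> {0,1,2}}"

lemma pds_in_partial_ops: "set w \<subseteq> {0,1,2} \<Longrightarrow> pds w \<in> partial_ops"
  unfolding partial_ops_def by blast

lemma represented_id: "represented partial_ops (\<lambda>\<phi>. \<phi>)"
proof -
  have "pds [] \<in> trig_span partial_ops" by (intro trig_span.base pds_in_partial_ops) simp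
  then show ?thesis unfolding represented_def by (intro bexI[of _ "pds []"]) auto
qed

lemma partial_span_regular:
  assumes "A \<in> trig_span partial_ops" "smooth \<phi>"
  shows "continuous_on UNIV (A \<phi>) \<and> (\<forall>i\<in>{0,1,2}. \<forall>x. (\<lambda>h. A \<phi> (x + h *\<^sub>R ev i)) differentiable (at 0))"
  using assms(1)
proof (induction A rule: trig_span.induct)
  case (base A)
  then show ?case using smooth_pds[OF assms(2)] by (auto simp: partial_ops_def)
next
  case (add A A')
  then show ?case by (auto intro!: continuous_on_add differentiable_add)
next
  case (scale A a b)
  have "continuous_on UNIV (\<lambda>x::pt. trig a b (fst x))"
    unfolding trig_def by (auto intro!: continuous_intros)
  moreover have "(\<lambda>h. trig a b (fst (x + h *\<^sub>R ev i)) *\<^sub>R A \<phi> (x + h *\<^sub>R ev i)) differentiable (at 0)"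
    if "i \<in> {0,1,2}" for i x
    using pd_trig_scale_has scale.IH that unfolding differentiable_def has_vector_derivative_def by blast
  ultimately show ?case using scale.IH by (auto intro!: continuous_on_scaleR)
qed

lemma partial_span_pd:
  assumes "A \<in> trig_span partial_ops" "i \<in> {0,1,2}"
  shows "represented partial_ops (\<lambda>\<phi>. pd i (A \<phi>))"
proof (rule represented_pd[OF assms(1)])
  fix A assume "A \<in> partial_ops"
  then obtain w where w: "A = pds w" "set w \<subseteq> {0,1,2}" by (auto simp: partial_ops_def)
  have "pds (i # w) \<in> trig_span partial_ops"
    using w assms(2) by (intro trig_span.base pds_in_partial_ops) auto
  then show "represented partial_ops (\<lambda>\<phi>. pd i (A \<phi>))"
    unfolding represented_def w(1) by (intro bexI[of _ "pds (i # w)"]) auto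
qed (use partial_span_regular assms(2) in blast)

lemma represented_partial_pds:
  assumes "represented partial_ops T" "set w \<subseteq> {0,1,2}"
  shows "represented partial_ops (\<lambda>\<phi>. pds w (T \<phi>))"
  using assms(2)
proof (induction w)
  case (Cons i w)
  then have "represented partial_ops (\<lambda>\<phi>. pds w (T \<phi>))" "i \<in> {0,1,2}" by auto
  from represented_compose[OF this(1) partial_span_pd[OF _ this(2)]] show ?case by simp
qed (simp add: assms(1))

lemma represented_partial_smooth:
  assumes "represented partial_ops T" "smooth \<phi>"
  shows "smooth (T \<phi>)"
  unfolding smooth_def
proof (intro allI impI)
  fix w :: "nat list" assume "set w \<subseteq> {0,1,2}"
  then have "represented partial_ops (\<lambda>\<phi>. pds w (T \<phi>))"
    by (rule represented_partial_pds[OF assms(1)])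
  then obtain A where A: "A \<in> trig_span partial_ops" "\<forall>\<phi>. smooth \<phi> \<longrightarrow> pds w (T \<phi>) = A \<phi>"
    unfolding represented_def by blast
  then have "pds w (T \<phi>) = A \<phi>" using assms(2) by blast
  then show "continuous_on UNIV (pds w (T \<phi>)) \<and>
      (\<forall>i\<in>{0,1,2}. \<forall>x. (\<lambda>h. pds w (T \<phi>) (x + h *\<^sub>R ev i)) differentiable (at 0))"
    using partial_span_regular[OF A(1) assms(2)] by simp
qed

lemma pds_smooth: "smooth \<phi> \<Longrightarrow> set w \<subseteq> {0,1,2} \<Longrightarrow> smooth (pds w \<phi>)"
  by (rule represented_partial_smooth[OF represented_span[OF trig_span.base[OF pds_in_partial_ops]]])

lemma pd_smooth: "smooth \<phi> \<Longrightarrow> i \<in> {0,1,2} \<Longrightarrow> smooth (pd i \<phi>)"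
  using pds_smooth[of \<phi> "[i]"] by simp

lemma pd_commute:
  assumes s: "smooth f" and i: "i \<in> {0,1,2}" and j: "j \<in> {0,1,2}"
  shows "pd i (pd j f) = pd j (pd i f)"
proof
  fix x
  have d: "\<forall>y. (\<lambda>h. g (y + h *\<^sub>R ev k)) differentiable (at 0)" if "smooth g" "k \<in> {0,1,2}" for g k
    using smooth_differentiable that by blast
  have c: "isCont (pd k (pd l f)) x" if "k \<in> {0,1,2}" "l \<in> {0,1,2}" for k l
  proof -
    have "set [k,l] \<subseteq> {0,1,2}" using that by simp
    from conjunct1[OF smooth_pds[OF s this]] have "isCont (pds [k,l] f) x"
      by (metis UNIV_I continuous_on_eq_continuous_at open_UNIV)
    then show ?thesis by simp
  qed
  show "pd i (pd j f) x = pd j (pd i f) x"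
    using d[OF s j] d[OF s i] d[OF pd_smooth[OF s j] i] d[OF pd_smooth[OF s i] j] c[OF i j] c[OF j i]
    unfolding pd_ddir by (rule ddir_commute)
qed

lemma pds_replicate: "pds (replicate n i) f = (pd i ^^ n) f"
  by (induction n) auto

lemma pd_pow_commute:
  assumes s: "smooth f" and i: "i \<in> {0,1,2}" and j: "j \<in> {0,1,2}"
  shows "pd i ((pd j ^^ n) f) = (pd j ^^ n) (pd i f)"
proof (induction n)
  case (Suc n)
  have "set (replicate n j) \<subseteq> {0,1,2}" using j by (induction n) auto
  from pds_smooth[OF s this] have "smooth ((pd j ^^ n) f)" by (simp add: pds_replicate)
  then show ?case using Suc pd_commute[OF _ i j] by simp
qed simp

lemma pds_append: "pds (u @ v) f = pds u (pds v f)"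
  by (induction u) auto

lemma pdalpha_pds: "pdalpha (a,b,c) f = pds (replicate a 0 @ replicate b 1 @ replicate c 2) f"
  by (simp add: pdalpha_def pds_append pds_replicate)

fun multi_index :: "nat list \<Rightarrow> nat \<times> nat \<times> nat" where
  "multi_index [] = (0,0,0)"
| "multi_index (i # w) = (case multi_index w of (a,b,c) \<Rightarrow>
     (if i = 0 then (Suc a,b,c) else if i = 1 then (a, Suc b, c) else (a, b, Suc c)))"

lemma pds_multi_index:
  assumes "smooth \<phi>" "set w \<subseteq> {0,1,2}"
  shows "pds w \<phi> = pdalpha (multi_index w) \<phi>"
  using assms(2)
proof (induction w)
  case (Cons i w)
  obtain a b c where abc: "multi_index w = (a,b,c)" by (cases "multi_index w")
  have i: "i \<in> {0,1,2}" using Cons.prems by auto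
  have s1: "smooth ((pd 1 ^^ b) ((pd 2 ^^ c) \<phi>))"
    using pds_smooth[OF assms(1), of "replicate b 1 @ replicate c 2"]
    by (simp add: pds_append pds_replicate set_replicate_conv_if)
  have s2: "smooth ((pd 2 ^^ c) \<phi>)"
    using pds_smooth[OF assms(1), of "replicate c 2"] by (simp add: pds_replicate set_replicate_conv_if)
  have "pds (i # w) \<phi> = pd i ((pd 0 ^^ a) ((pd 1 ^^ b) ((pd 2 ^^ c) \<phi>)))"
    using Cons abc by (simp add: pdalpha_def)
  also have "\<dots> = pdalpha (multi_index (i # w)) \<phi>"
  proof -
    consider "i = 0" | "i = 1" | "i = 2" using i by auto
    then show ?thesis
    proof cases
      case 1
      then show ?thesis using abc by (simp add: pdalpha_def)
    next
      case 2
      then show ?thesis using abc pd_pow_commute[OF s1, of 1 0 a] by (simp add: pdalpha_def)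
    next
      case 3
      then show ?thesis
        using abc pd_pow_commute[OF s1, of 2 0 a] pd_pow_commute[OF s2, of 2 1 b] by (simp add: pdalpha_def)
    qed
  qed
  finally show ?case .
qed (simp add: pdalpha_def)

lemma partial_ops_dominated:
  assumes "A \<in> partial_ops"
  shows "dominated A pdalpha"
proof -
  obtain w where w: "A = pds w" "set w \<subseteq> {0,1,2}" using assms by (auto simp: partial_ops_def)
  show ?thesis unfolding dominated_def w(1)
    by (intro exI[of _ "[multi_index w]"] exI[of _ 1]) (simp add: pds_multi_index[OF _ w(2)])
qed

text \<open>In coordinates, \<open>X\<^sub>1 = \<partial>\<^sub>t\<close>, and \<open>(X\<^sub>2, X\<^sub>3)\<close> is \<open>(\<partial>\<^sub>1, \<partial>\<^sub>2)\<close> transformed by the matrix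
  \<open>[[cos t, -sin t], [-sin t, -cos t]]\<close>, which is its own inverse.\<close>

lemma Xdiff_12_formula:
  assumes s: "smooth F"
  shows "Xdiff 1 F x = cos (fst x) *\<^sub>R pd 1 F x + (- sin (fst x)) *\<^sub>R pd 2 F x"
    and "Xdiff 2 F x = (- sin (fst x)) *\<^sub>R pd 1 F x + (- cos (fst x)) *\<^sub>R pd 2 F x"
proof -
  have d1: "\<forall>y. (\<lambda>h. F (y + h *\<^sub>R ev 1)) differentiable (at 0)"
    and d2: "\<forall>y. (\<lambda>h. F (y + h *\<^sub>R ev 2)) differentiable (at 0)"
    using smooth_differentiable[OF s] by auto
  have c: "continuous_on UNIV (pd 2 F)" using smooth_pds[OF s, of "[2]"] by simp
  have x1: "xdir 1 (fst x) = (0, cos (fst x), - sin (fst x))"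
    and x2: "xdir 2 (fst x) = (0, - sin (fst x), - cos (fst x))"
    by (simp_all add: xdir_def)
  show "Xdiff 1 F x = cos (fst x) *\<^sub>R pd 1 F x + (- sin (fst x)) *\<^sub>R pd 2 F x"
    unfolding Xdiff_ddir ddir_def x1 by (rule vector_derivative_at[OF ddir_n_plane[OF d1 d2 c]])
  show "Xdiff 2 F x = (- sin (fst x)) *\<^sub>R pd 1 F x + (- cos (fst x)) *\<^sub>R pd 2 F x"
    unfolding Xdiff_ddir ddir_def x2 by (rule vector_derivative_at[OF ddir_n_plane[OF d1 d2 c]])
qed

lemma rotation_involution:
  fixes v w :: "'a::real_vector"
  assumes "c * c + s * s = 1"
  shows "c *\<^sub>R (c *\<^sub>R v + (- s) *\<^sub>R w) + (- s) *\<^sub>R ((- s) *\<^sub>R v + (- c) *\<^sub>R w) = v"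
    and "(- s) *\<^sub>R (c *\<^sub>R v + (- s) *\<^sub>R w) + (- c) *\<^sub>R ((- s) *\<^sub>R v + (- c) *\<^sub>R w) = w"
proof -
  have "c *\<^sub>R (c *\<^sub>R v + (- s) *\<^sub>R w) + (- s) *\<^sub>R ((- s) *\<^sub>R v + (- c) *\<^sub>R w)
      = (c * c + s * s) *\<^sub>R v"
    by (simp add: algebra_simps)
  then show "c *\<^sub>R (c *\<^sub>R v + (- s) *\<^sub>R w) + (- s) *\<^sub>R ((- s) *\<^sub>R v + (- c) *\<^sub>R w) = v"
    using assms by simp
  have "(- s) *\<^sub>R (c *\<^sub>R v + (- s) *\<^sub>R w) + (- c) *\<^sub>R ((- s) *\<^sub>R v + (- c) *\<^sub>R w)
      = (c * c + s * s) *\<^sub>R w"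
    by (simp add: algebra_simps)
  then show "(- s) *\<^sub>R (c *\<^sub>R v + (- s) *\<^sub>R w) + (- c) *\<^sub>R ((- s) *\<^sub>R v + (- c) *\<^sub>R w) = w"
    using assms by simp
qed

lemma Xdiff_pd_exchange:
  assumes "i \<in> {1,2}"
  obtains p q p' q' where
    "\<And>F x. smooth F \<Longrightarrow> Xdiff i F x = trig p q (fst x) *\<^sub>R pd 1 F x + trig p' q' (fst x) *\<^sub>R pd 2 F x"
    "\<And>F x. smooth F \<Longrightarrow> pd i F x = trig p q (fst x) *\<^sub>R Xdiff 1 F x + trig p' q' (fst x) *\<^sub>R Xdiff 2 F x"
proof -
  have one: "cos t * cos t + sin t * sin t = (1::real)" for t
    using sin_cos_squared_add[of t] by (simp add: power2_eq_square)
  have cs: "trig 1 0 t = cos t" "trig 0 (-1) t = - sin t" "trig (-1) 0 t = - cos t" for t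
    by (simp_all add: trig_def)
  consider "i = 1" | "i = 2" using assms by auto
  then show ?thesis
  proof cases
    case 1
    show ?thesis
      by (rule that[of 1 0 0 "-1"])
        (simp_all only: 1 cs Xdiff_12_formula rotation_involution(1)[OF one])
  next
    case 2
    show ?thesis
      by (rule that[of 0 "-1" "-1" 0])
        (simp_all only: 2 cs Xdiff_12_formula rotation_involution(2)[OF one])
  qed
qed

lemma partial_span_Xdiff:
  assumes A: "A \<in> trig_span partial_ops" and i: "i \<in> {0,1,2}"
  shows "represented partial_ops (\<lambda>\<phi>. Xdiff i (A \<phi>))"
proof (cases "i = 0")
  case True
  then show ?thesis using partial_span_pd[OF A] by (simp add: Xdiff_0)
next
  case False
  then have "i \<in> {1,2}" using i by auto
  then obtain p q p' q' where X:
    "\<And>F x. smooth F \<Longrightarrow> Xdiff i F x = trig p q (fst x) *\<^sub>R pd 1 F x + trig p' q' (fst x) *\<^sub>R pd 2 F x"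
    "\<And>F x. smooth F \<Longrightarrow> pd i F x = trig p q (fst x) *\<^sub>R Xdiff 1 F x + trig p' q' (fst x) *\<^sub>R Xdiff 2 F x"
    by (rule Xdiff_pd_exchange) blast
  obtain A1 A2 where A12: "A1 \<in> trig_span partial_ops" "A2 \<in> trig_span partial_ops"
    "\<forall>\<phi>. smooth \<phi> \<longrightarrow> pd 1 (A \<phi>) = A1 \<phi>" "\<forall>\<phi>. smooth \<phi> \<longrightarrow> pd 2 (A \<phi>) = A2 \<phi>"
    using partial_span_pd[OF A, of 1] partial_span_pd[OF A, of 2] unfolding represented_def by auto
  define B where "B = (\<lambda>\<phi> x. trig p q (fst x) *\<^sub>R A1 \<phi> x + trig p' q' (fst x) *\<^sub>R A2 \<phi> x)"
  have "B \<in> trig_span partial_ops" unfolding B_def by (intro trig_span.add trig_span.scale A12(1,2))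
  moreover have "Xdiff i (A \<phi>) = B \<phi>" if "smooth \<phi>" for \<phi>
    using X(1)[OF represented_partial_smooth[OF represented_span[OF A] that]] A12(3,4) that
    by (auto simp: B_def)
  ultimately show ?thesis unfolding represented_def by blast
qed

lemma Xalpha_represented: "represented partial_ops (Xalpha \<alpha>)"
proof -
  obtain a b c where \<alpha>: "\<alpha> = (a,b,c)" by (cases \<alpha>)
  have X: "\<And>A. A \<in> trig_span partial_ops \<Longrightarrow> represented partial_ops (\<lambda>\<phi>. Xdiff i (A \<phi>))"
    if "i \<in> {0,1,2}" for i
    using partial_span_Xdiff that by blast
  have "represented partial_ops (\<lambda>\<phi>. (Xdiff 2 ^^ c) \<phi>)"
    by (rule represented_iterate[OF represented_id X]) simp
  then have "represented partial_ops (\<lambda>\<phi>. (Xdiff 1 ^^ b) ((Xdiff 2 ^^ c) \<phi>))"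
    by (rule represented_iterate[OF _ X]) simp
  then have "represented partial_ops (\<lambda>\<phi>. (Xdiff 0 ^^ a) ((Xdiff 1 ^^ b) ((Xdiff 2 ^^ c) \<phi>)))"
    by (rule represented_iterate[OF _ X]) simp
  moreover have "Xalpha \<alpha> = (\<lambda>\<phi>. (Xdiff 0 ^^ a) ((Xdiff 1 ^^ b) ((Xdiff 2 ^^ c) \<phi>)))"
    unfolding \<alpha> by (rule ext) (rule Xalpha_Xdiff)
  ultimately show ?thesis by simp
qed

lemma Xalpha_smooth: "smooth \<phi> \<Longrightarrow> smooth (Xalpha \<alpha> \<phi>)"
  by (rule represented_partial_smooth[OF Xalpha_represented])

lemma Xalpha_dominated: "dominated (Xalpha \<alpha>) pdalpha"
  by (rule represented_dominated[OF Xalpha_represented partial_ops_dominated])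

text \<open>Along the \<open>\<frak>n\<close>-directions \<open>t\<close> is constant,
  so \<open>t\<close>-dependent coefficients behave like constants.\<close>

lemma pd_n_trig_combination:
  fixes F G :: "pt \<Rightarrow> complex"
  assumes i: "i \<noteq> 0" and dF: "(\<lambda>h. F (x + h *\<^sub>R ev i)) differentiable (at 0)"
    and dG: "(\<lambda>h. G (x + h *\<^sub>R ev i)) differentiable (at 0)"
  shows "pd i (\<lambda>y. p (fst y) *\<^sub>R F y + q (fst y) *\<^sub>R G y) x = p (fst x) *\<^sub>R pd i F x + q (fst x) *\<^sub>R pd i G x"
proof -
  have f: "fst (x + h *\<^sub>R ev i) = fst x" for h using i by (simp add: ev_def)
  have "((\<lambda>h. p (fst x) *\<^sub>R F (x + h *\<^sub>R ev i) + q (fst x) *\<^sub>R G (x + h *\<^sub>R ev i)) has_vector_derivative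
     (p (fst x) *\<^sub>R pd i F x + q (fst x) *\<^sub>R pd i G x)) (at 0)"
    by (intro has_vector_derivative_add bounded_linear.has_vector_derivative[OF bounded_linear_scaleR_right] pd_has dF dG)
  then show ?thesis unfolding pd_def[of i "\<lambda>y. p (fst y) *\<^sub>R F y + q (fst y) *\<^sub>R G y"] f
    by (rule vector_derivative_at)
qed

lemma Xdiff_12_commute:
  assumes s: "smooth \<psi>"
  shows "Xdiff 2 (Xdiff 1 \<psi>) = Xdiff 1 (Xdiff 2 \<psi>)"
proof
  fix x :: pt
  define c where "c = cos (fst x)"
  define sn where "sn = sin (fst x)"
  have sX: "smooth (Xdiff 1 \<psi>)" "smooth (Xdiff 2 \<psi>)"
    using Xalpha_smooth[OF s, of "(0,1,0)"] Xalpha_smooth[OF s, of "(0,0,1)"] by (simp_all add: Xalpha_Xdiff)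
  have e1: "Xdiff 1 \<psi> = (\<lambda>y. cos (fst y) *\<^sub>R pd 1 \<psi> y + (- sin (fst y)) *\<^sub>R pd 2 \<psi> y)"
    by (rule ext) (rule Xdiff_12_formula(1)[OF s])
  have e2: "Xdiff 2 \<psi> = (\<lambda>y. (- sin (fst y)) *\<^sub>R pd 1 \<psi> y + (- cos (fst y)) *\<^sub>R pd 2 \<psi> y)"
    by (rule ext) (rule Xdiff_12_formula(2)[OF s])
  have d: "(\<lambda>h. pd j \<psi> (x + h *\<^sub>R ev i)) differentiable (at 0)" if "i \<in> {0,1,2}" "j \<in> {0,1,2}" for i j
    using smooth_differentiable[OF pd_smooth[OF s that(2)] that(1)] .
  have p11: "pd 1 (Xdiff 1 \<psi>) x = c *\<^sub>R pd 1 (pd 1 \<psi>) x + (- sn) *\<^sub>R pd 1 (pd 2 \<psi>) x"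
    unfolding e1 c_def sn_def by (rule pd_n_trig_combination[of 1 "pd 1 \<psi>" x "pd 2 \<psi>" cos "\<lambda>t. - sin t"]) (auto intro: d)
  have p21: "pd 2 (Xdiff 1 \<psi>) x = c *\<^sub>R pd 2 (pd 1 \<psi>) x + (- sn) *\<^sub>R pd 2 (pd 2 \<psi>) x"
    unfolding e1 c_def sn_def by (rule pd_n_trig_combination[of 2 "pd 1 \<psi>" x "pd 2 \<psi>" cos "\<lambda>t. - sin t"]) (auto intro: d)
  have p12: "pd 1 (Xdiff 2 \<psi>) x = (- sn) *\<^sub>R pd 1 (pd 1 \<psi>) x + (- c) *\<^sub>R pd 1 (pd 2 \<psi>) x"
    unfolding e2 c_def sn_def by (rule pd_n_trig_combination[of 1 "pd 1 \<psi>" x "pd 2 \<psi>" "\<lambda>t. - sin t" "\<lambda>t. - cos t"]) (auto intro: d)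
  have p22: "pd 2 (Xdiff 2 \<psi>) x = (- sn) *\<^sub>R pd 2 (pd 1 \<psi>) x + (- c) *\<^sub>R pd 2 (pd 2 \<psi>) x"
    unfolding e2 c_def sn_def by (rule pd_n_trig_combination[of 2 "pd 1 \<psi>" x "pd 2 \<psi>" "\<lambda>t. - sin t" "\<lambda>t. - cos t"]) (auto intro: d)
  have sw: "pd 2 (pd 1 \<psi>) = pd 1 (pd 2 \<psi>)" by (rule pd_commute[OF s]) auto
  have "Xdiff 2 (Xdiff 1 \<psi>) x = (- sn) *\<^sub>R pd 1 (Xdiff 1 \<psi>) x + (- c) *\<^sub>R pd 2 (Xdiff 1 \<psi>) x"
    using Xdiff_12_formula(2)[OF sX(1), of x] by (simp add: c_def sn_def)
  also have "\<dots> = c *\<^sub>R pd 1 (Xdiff 2 \<psi>) x + (- sn) *\<^sub>R pd 2 (Xdiff 2 \<psi>) x"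
    unfolding p11 p21 p12 p22 sw by (simp add: algebra_simps)
  also have "\<dots> = Xdiff 1 (Xdiff 2 \<psi>) x"
    using Xdiff_12_formula(1)[OF sX(2), of x] by (simp add: c_def sn_def)
  finally show "Xdiff 2 (Xdiff 1 \<psi>) x = Xdiff 1 (Xdiff 2 \<psi>) x" .
qed

lemma Xdiff_2_Xalpha_n:
  assumes "smooth \<phi>"
  shows "Xdiff 2 (Xalpha (0,b,c) \<phi>) = Xalpha (0,b,Suc c) \<phi>"
proof -
  have "Xdiff 2 ((Xdiff 1 ^^ b) \<psi>) = (Xdiff 1 ^^ b) (Xdiff 2 \<psi>)" if "smooth \<psi>" for \<psi>
  proof (induction b)
    case (Suc b)
    have "smooth ((Xdiff 1 ^^ b) \<psi>)"
      using Xalpha_smooth[OF that, of "(0,b,0)"] by (simp add: Xalpha_Xdiff)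
    then show ?case using Suc Xdiff_12_commute by simp
  qed simp
  moreover have "smooth ((Xdiff 2 ^^ c) \<phi>)"
    using Xalpha_smooth[OF assms, of "(0,0,c)"] by (simp add: Xalpha_Xdiff)
  ultimately show ?thesis by (simp add: Xalpha_Xdiff)
qed

text \<open>First \<open>\<partial>\<^sub>1, \<partial>\<^sub>2\<close> are handled on the \<open>X\<^sup>\<gamma>\<close> without \<open>X\<^sub>1\<close>-part, then \<open>\<partial>\<^sub>t = X\<^sub>1\<close>.\<close>

definition X_ops :: "op set" where
  "X_ops = range Xalpha"

definition Xn_ops :: "op set" where
  "Xn_ops = {Xalpha (0,b,c) | b c. True}"

lemma represented_X_smooth: "represented X_ops T \<Longrightarrow> smooth \<phi> \<Longrightarrow> smooth (T \<phi>)"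
  by (rule represented_partial_smooth[OF represented_trans])
    (auto simp: X_ops_def intro: Xalpha_represented)

lemma Xn_span_X: "A \<in> trig_span Xn_ops \<Longrightarrow> represented X_ops A"
  by (rule represented_trans[OF represented_span])
    (auto simp: Xn_ops_def X_ops_def intro!: represented_span trig_span.base)

lemma Xn_span_pd:
  assumes A: "A \<in> trig_span Xn_ops" and i: "i \<in> {1,2}"
  shows "represented Xn_ops (\<lambda>\<phi>. pd i (A \<phi>))"
proof (rule represented_pd[OF A])
  obtain p q p' q' where P:
    "\<And>F x. smooth F \<Longrightarrow> Xdiff i F x = trig p q (fst x) *\<^sub>R pd 1 F x + trig p' q' (fst x) *\<^sub>R pd 2 F x"
    "\<And>F x. smooth F \<Longrightarrow> pd i F x = trig p q (fst x) *\<^sub>R Xdiff 1 F x + trig p' q' (fst x) *\<^sub>R Xdiff 2 F x"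
    by (rule Xdiff_pd_exchange[OF i]) blast
  fix B assume "B \<in> Xn_ops"
  then obtain b c where B: "B = Xalpha (0,b,c)" by (auto simp: Xn_ops_def)
  define C where "C = (\<lambda>\<phi> x. trig p q (fst x) *\<^sub>R Xalpha (0, Suc b, c) \<phi> x
      + trig p' q' (fst x) *\<^sub>R Xalpha (0, b, Suc c) \<phi> x)"
  have "C \<in> trig_span Xn_ops"
    unfolding C_def by (intro trig_span.add trig_span.scale trig_span.base) (auto simp: Xn_ops_def)
  moreover have "pd i (B \<phi>) = C \<phi>" if "smooth \<phi>" for \<phi>
  proof -
    have "Xdiff 1 (Xalpha (0,b,c) \<phi>) = Xalpha (0, Suc b, c) \<phi>"
      by (simp add: Xalpha_Xdiff)
    then show ?thesis
      using P(2)[OF Xalpha_smooth[OF that]] Xdiff_2_Xalpha_n[OF that] by (auto simp: B C_def)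
  qed
  ultimately show "represented Xn_ops (\<lambda>\<phi>. pd i (B \<phi>))" unfolding represented_def by blast
next
  fix A \<phi> x assume "A \<in> trig_span Xn_ops" "smooth \<phi>"
  then show "(\<lambda>h. A \<phi> (x + h *\<^sub>R ev i)) differentiable (at 0)"
    using smooth_differentiable[OF represented_X_smooth[OF Xn_span_X]] i by blast
qed

lemma X_span_pd0:
  assumes "A \<in> trig_span X_ops"
  shows "represented X_ops (\<lambda>\<phi>. pd 0 (A \<phi>))"
proof (rule represented_pd[OF assms])
  fix B assume "B \<in> X_ops"
  then obtain a b c where B: "B = Xalpha (a,b,c)" by (auto simp: X_ops_def)
  have "Xalpha (Suc a, b, c) \<in> trig_span X_ops" by (intro trig_span.base) (simp add: X_ops_def)
  moreover have "pd 0 (B \<phi>) = Xalpha (Suc a, b, c) \<phi>" for \<phi>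
    by (simp add: B Xalpha_Xdiff Xdiff_0)
  ultimately show "represented X_ops (\<lambda>\<phi>. pd 0 (B \<phi>))" unfolding represented_def by blast
next
  fix A \<phi> x assume "A \<in> trig_span X_ops" "smooth \<phi>"
  then show "(\<lambda>h. A \<phi> (x + h *\<^sub>R ev 0)) differentiable (at 0)"
    using smooth_differentiable[OF represented_X_smooth[OF represented_span]] by blast
qed

lemma pdalpha_represented: "represented X_ops (pdalpha \<beta>)"
proof -
  obtain a b c where \<beta>: "\<beta> = (a,b,c)" by (cases \<beta>)
  have P: "\<And>A. A \<in> trig_span Xn_ops \<Longrightarrow> represented Xn_ops (\<lambda>\<phi>. pd i (A \<phi>))"
    if "i \<in> {1,2}" for i
    using Xn_span_pd that by blast
  have "Xalpha (0,0,0) \<in> trig_span Xn_ops"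
    by (intro trig_span.base) (auto simp: Xn_ops_def)
  moreover have "Xalpha (0,0,0) = (\<lambda>\<phi>. \<phi>)"
    by (rule ext) (simp add: Xalpha_Xdiff)
  ultimately have "represented Xn_ops (\<lambda>\<phi>. \<phi>)"
    using represented_span by metis
  then have "represented Xn_ops (\<lambda>\<phi>. (pd 2 ^^ c) \<phi>)"
    by (rule represented_iterate[OF _ P]) simp
  then have "represented Xn_ops (\<lambda>\<phi>. (pd 1 ^^ b) ((pd 2 ^^ c) \<phi>))"
    by (rule represented_iterate[OF _ P]) simp
  then have "represented X_ops (\<lambda>\<phi>. (pd 1 ^^ b) ((pd 2 ^^ c) \<phi>))"
    by (rule represented_trans) (auto simp: Xn_ops_def X_ops_def intro!: represented_span trig_span.base)
  then have "represented X_ops (\<lambda>\<phi>. (pd 0 ^^ a) ((pd 1 ^^ b) ((pd 2 ^^ c) \<phi>)))"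
    by (rule represented_iterate[OF _ X_span_pd0])
  then show ?thesis by (simp add: \<beta> pdalpha_def[abs_def])
qed

lemma pdalpha_dominated: "dominated (pdalpha \<beta>) Xalpha"
  by (rule represented_dominated[OF pdalpha_represented]) (auto simp: X_ops_def intro: dominated_self)

section \<open>Growth of the weight \<open>\<sigma>\<close>\<close>

definition l1norm :: "pt \<Rightarrow> real" where
  "l1norm x = \<bar>fst x\<bar> + \<bar>fst (snd x)\<bar> + \<bar>snd (snd x)\<bar>"

lemma l1norm_nonneg: "l1norm x \<ge> 0"
  by (simp add: l1norm_def)

lemma coordinate_le_norm:
  fixes v :: pt
  shows "\<bar>fst v\<bar> \<le> norm v" "\<bar>fst (snd v)\<bar> \<le> norm v" "\<bar>snd (snd v)\<bar> \<le> norm v"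
proof -
  obtain a b c where v: "v = (a,b,c)" by (cases v)
  show "\<bar>fst v\<bar> \<le> norm v" using norm_fst_le[of a "(b,c)"] by (simp add: v)
  show "\<bar>fst (snd v)\<bar> \<le> norm v" using norm_snd_le[of "(b,c)" a] norm_fst_le[of b c] by (simp add: v)
  show "\<bar>snd (snd v)\<bar> \<le> norm v" using norm_snd_le[of "(b,c)" a] norm_snd_le[of c b] by (simp add: v)
qed

lemma norm_le_l1norm: "norm v \<le> l1norm v"
proof -
  obtain a b c where v: "v = (a,b,c)" by (cases v)
  have "norm (a,b,c) \<le> norm a + norm (b,c)" by (rule norm_Pair_le)
  also have "\<dots> \<le> norm a + (norm b + norm c)" using norm_Pair_le[of b c] by simp
  finally show ?thesis by (simp add: v l1norm_def)
qed

lemma l1norm_le_norm: "l1norm v \<le> 3 * norm v"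
  using coordinate_le_norm[of v] by (simp add: l1norm_def)

lemma abs_trig_le: "\<bar>u * cos t\<bar> \<le> \<bar>u::real\<bar>" "\<bar>u * sin t\<bar> \<le> \<bar>u\<bar>"
  using abs_sin_le_one[of t] abs_cos_le_one[of t]
  by (auto simp: abs_mult intro!: mult_left_le)

definition Ad_coord :: "pt \<Rightarrow> pt \<Rightarrow> pt" where
  "Ad_coord g v = (fst v,
     cos (fst g) * fst (snd v) + sin (fst g) * snd (snd v) - snd (snd g) * fst v,
     - sin (fst g) * fst (snd v) + cos (fst g) * snd (snd v) + fst (snd g) * fst v)"

lemma conj_has_derivative: "((\<lambda>h. gmult (gmult g h) (ginv g)) has_derivative Ad_coord g) (at 0)"
proof -
  obtain t n1 n2 where g: "g = (t,n1,n2)" by (cases g)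
  have e: "(\<lambda>h. gmult (gmult g h) (ginv g)) = (\<lambda>h. (t + fst h + - t,
     n1 + fst (snd h) * cos t + snd (snd h) * sin t +
       - (n1 * cos t - n2 * sin t) * cos (t + fst h) + - (n1 * sin t + n2 * cos t) * sin (t + fst h),
     n2 - fst (snd h) * sin t + snd (snd h) * cos t -
       - (n1 * cos t - n2 * sin t) * sin (t + fst h) + - (n1 * sin t + n2 * cos t) * cos (t + fst h)))"
    by (simp add: g gmult_eq ginv_eq fun_eq_iff)
  have s: "sin t * sin t = 1 - cos t * cos t"
    using sin_cos_squared_add[of t] by (simp add: power2_eq_square)
  show ?thesis unfolding e
    by (auto intro!: derivative_eq_intros has_derivative_fst[OF has_derivative_ident]
        has_derivative_snd[OF has_derivative_ident] simp: Ad_coord_def g fun_eq_iff algebra_simps s)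
qed

lemma Ad_eq: "Ad g = Ad_coord g"
  unfolding Ad_def using frechet_derivative_at[OF conj_has_derivative] by (simp add: zero_prod_def)

lemma onorm_Ad_ge: "onorm (Ad g) \<ge> 1"
proof -
  have "bounded_linear (Ad_coord g)"
    using conj_has_derivative has_derivative_bounded_linear by blast
  then have "norm (Ad_coord g (0,1,0)) \<le> onorm (Ad_coord g) * norm ((0,1,0)::pt)"
    by (rule onorm)
  moreover have "norm (Ad_coord g (0,1,0)) = 1"
    by (simp add: Ad_coord_def norm_Pair)
  ultimately show ?thesis by (simp add: Ad_eq)
qed

lemma onorm_Ad_le: "onorm (Ad g) \<le> 5 + \<bar>fst (snd g)\<bar> + \<bar>snd (snd g)\<bar>"
  unfolding Ad_eq
proof (rule onorm_le)
  fix v :: pt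
  obtain t n1 n2 where g: "g = (t,n1,n2)" by (cases g)
  obtain a b c where v: "v = (a,b,c)" by (cases v)
  have na: "\<bar>a\<bar> \<le> norm v" "\<bar>b\<bar> \<le> norm v" "\<bar>c\<bar> \<le> norm v" using coordinate_le_norm[of v] by (auto simp: v)
  have tr: "\<bar>cos t * b\<bar> \<le> \<bar>b\<bar>" "\<bar>sin t * c\<bar> \<le> \<bar>c\<bar>" "\<bar>sin t * b\<bar> \<le> \<bar>b\<bar>" "\<bar>cos t * c\<bar> \<le> \<bar>c\<bar>"
    using abs_trig_le[of b t] abs_trig_le[of c t] by (simp_all add: mult.commute)
  have tri: "\<bar>x + y - z\<bar> \<le> \<bar>x\<bar> + \<bar>y\<bar> + \<bar>z\<bar>" "\<bar>- x + y + z\<bar> \<le> \<bar>x\<bar> + \<bar>y\<bar> + \<bar>z\<bar>" for x y z :: real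
    by linarith+
  have "norm (Ad_coord g v) \<le> l1norm (Ad_coord g v)" by (rule norm_le_l1norm)
  also have "l1norm (Ad_coord g v) = \<bar>a\<bar> + \<bar>cos t * b + sin t * c - n2 * a\<bar> + \<bar>- (sin t * b) + cos t * c + n1 * a\<bar>"
    by (simp add: l1norm_def Ad_coord_def g v)
  also have "\<dots> \<le> \<bar>a\<bar> + (\<bar>b\<bar> + \<bar>c\<bar> + \<bar>n2\<bar> * \<bar>a\<bar>) + (\<bar>b\<bar> + \<bar>c\<bar> + \<bar>n1\<bar> * \<bar>a\<bar>)"
    using tri(1)[of "cos t * b" "sin t * c" "n2 * a"] tri(2)[of "sin t * b" "cos t * c" "n1 * a"] tr
    by (simp add: abs_mult)
  also have "\<dots> \<le> (5 + \<bar>n1\<bar> + \<bar>n2\<bar>) * norm v"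
    using na mult_left_mono[OF na(1), of "\<bar>n1\<bar>"] mult_left_mono[OF na(1), of "\<bar>n2\<bar>"]
    by (simp add: algebra_simps)
  finally show "norm (Ad_coord g v) \<le> (5 + \<bar>fst (snd g)\<bar> + \<bar>snd (snd g)\<bar>) * norm v" by (simp add: g)
qed

lemma onorm_Ad_inv_le: "onorm (Ad (ginv g)) \<le> 5 + 2 * l1norm g"
proof -
  obtain t n1 n2 where g: "g = (t,n1,n2)" by (cases g)
  have "onorm (Ad (ginv g)) \<le> 5 + \<bar>fst (snd (ginv g))\<bar> + \<bar>snd (snd (ginv g))\<bar>" by (rule onorm_Ad_le)
  moreover have "\<bar>fst (snd (ginv g))\<bar> \<le> \<bar>n1\<bar> + \<bar>n2\<bar>" "\<bar>snd (snd (ginv g))\<bar> \<le> \<bar>n1\<bar> + \<bar>n2\<bar>"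
    using abs_trig_le[of n1 t] abs_trig_le[of n2 t] by (simp_all add: ginv_eq g) linarith+
  ultimately show ?thesis using abs_ge_zero[of t] by (simp add: l1norm_def g) linarith
qed

lemma l1norm_gmult: "l1norm (gmult a u) \<le> l1norm a + 2 * l1norm u"
proof -
  obtain ta a1 a2 where a: "a = (ta,a1,a2)" by (cases a)
  obtain tu u1 u2 where u: "u = (tu,u1,u2)" by (cases u)
  have "\<bar>a1 + u1 * cos ta + u2 * sin ta\<bar> \<le> \<bar>a1\<bar> + \<bar>u1\<bar> + \<bar>u2\<bar>"
    "\<bar>a2 - u1 * sin ta + u2 * cos ta\<bar> \<le> \<bar>a2\<bar> + \<bar>u1\<bar> + \<bar>u2\<bar>"
    using abs_trig_le[of u1 ta] abs_trig_le[of u2 ta] by linarith+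
  then show ?thesis using abs_ge_zero[of tu] abs_ge_zero[of u1] abs_ge_zero[of u2]
    by (simp add: l1norm_def gmult_eq a u) linarith
qed

lemma setpow_l1norm:
  assumes "\<And>u. u \<in> U \<Longrightarrow> l1norm u \<le> K" "x \<in> setpow U j"
  shows "l1norm x \<le> 2 * K * real j"
  using assms(2)
proof (induction j arbitrary: x)
  case (Suc j)
  then obtain y u where x: "x = gmult y u" "y \<in> setpow U j" "u \<in> U" by auto
  have "l1norm x \<le> l1norm y + 2 * l1norm u" using l1norm_gmult x by simp
  also have "\<dots> \<le> 2 * K * real j + 2 * K" using Suc.IH[OF x(2)] assms(1)[OF x(3)] by simp
  finally show ?case by (simp add: algebra_simps)
qed (simp add: l1norm_def)

lemma setpow_N_multiple: "(0,a,b) \<in> W \<Longrightarrow> (0, real k * a, real k * b) \<in> setpow W k"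
proof (induction k)
  case (Suc k)
  have "gmult (0, real k * a, real k * b) (0,a,b) = (0, real (Suc k) * a, real (Suc k) * b)"
    by (simp add: gmult_eq algebra_simps)
  with Suc show ?case by (simp only: setpow.simps mem_Collect_eq) metis
qed (simp add: zero_prod_def)

lemma setpow_T_shift: "y \<in> setpow U j \<Longrightarrow> (s,0,0) \<in> U \<Longrightarrow> (fst y + real k * s, snd y) \<in> setpow U (j + k)"
proof (induction k)
  case (Suc k)
  have "gmult (fst y + real k * s, snd y) (s,0,0) = (fst y + real (Suc k) * s, snd y)"
    by (simp add: gmult_eq algebra_simps)
  with Suc show ?case by (simp only: setpow.simps add_Suc_right mem_Collect_eq) metis
qed simp

text \<open>If \<open>U\<close> contains the ball of radius \<open>r\<close>, then \<open>x = (t,n)\<close> with \<open>l1norm x < r N\<close> is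
  \<open>(n/N)\<^sup>N (t/N)\<^sup>N\<close>, a word of length \<open>2N\<close>, and \<open>(0,n)\<close> is a word of length \<open>N\<close> in \<open>U \<inter> N\<close>.\<close>

lemma setpow_reach:
  assumes U: "ball 0 r \<subseteq> U" and N: "l1norm x < r * real N"
  shows "(0, snd x) \<in> setpow (U \<inter> Nsub) N" "x \<in> setpow U (N + N)"
proof -
  obtain t n1 n2 where x: "x = (t,n1,n2)" by (cases x)
  have Npos: "real N > 0" using N l1norm_nonneg[of x] by (cases N) auto
  have inU: "v \<in> U" if "l1norm v \<le> l1norm x / real N" for v
  proof -
    have "l1norm x / real N < r" using N Npos by (simp add: divide_less_eq mult.commute)
    then have "norm v < r" using norm_le_l1norm[of v] that by linarith
    then show ?thesis using U by auto
  qed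
  define a b s where "a = n1 / real N" and "b = n2 / real N" and "s = t / real N"
  have "(0,a,b) \<in> U \<inter> Nsub"
    using Npos by (intro IntI inU) (auto simp: Nsub_def l1norm_def x a_def b_def add_divide_distrib divide_right_mono)
  from setpow_N_multiple[OF this, of N] setpow_N_multiple[of a b U N] this
  have nN: "(0, n1, n2) \<in> setpow (U \<inter> Nsub) N" and nU: "(0, n1, n2) \<in> setpow U N"
    using Npos by (auto simp: a_def b_def)
  then show "(0, snd x) \<in> setpow (U \<inter> Nsub) N" by (simp add: x)
  have "(s,0,0) \<in> U"
    using Npos by (intro inU) (auto simp: l1norm_def x s_def divide_right_mono)
  from setpow_T_shift[OF nU this, of N] show "x \<in> setpow U (N + N)"
    using Npos by (simp add: s_def x)
qed

text \<open>Taking \<open>N \<approx> l1norm x / r\<close> bounds both word lengths linearly in \<open>l1norm x\<close>.\<close>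

lemma word_count:
  assumes "r > 0"
  obtains N where "l1norm x < r * real N" "real N \<le> l1norm x / r + 2"
proof -
  define N where "N = nat \<lceil>l1norm x / r\<rceil> + 1"
  have "l1norm x / r \<ge> 0" using l1norm_nonneg[of x] assms by simp
  then have N: "real N = real_of_int \<lceil>l1norm x / r\<rceil> + 1" by (simp add: N_def)
  then have "l1norm x / r < real N" using ceiling_correct[of "l1norm x / r"] by linarith
  then have "l1norm x < r * real N" using assms by (simp add: divide_less_eq mult.commute)
  moreover have "real N \<le> l1norm x / r + 2" using N ceiling_correct[of "l1norm x / r"] by linarith
  ultimately show ?thesis by (rule that)
qed

lemma setpow_lenG:
  assumes "0 \<in> interior U"
  shows "x \<in> setpow U (lenG U x)"
proof -
  obtain r where r: "r > 0" "ball 0 r \<subseteq> U" using assms by (auto simp: mem_interior)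
  obtain N where "l1norm x < r * real N" using word_count[OF r(1)] by blast
  from setpow_reach(2)[OF r(2) this] show ?thesis unfolding lenG_def by (rule LeastI)
qed

lemma word_length_bounds:
  assumes "0 \<in> interior U"
  obtains c where "c > 0"
    "\<And>x. real (lenG U x) \<le> c * (1 + l1norm x)" "\<And>x. real (lenN U (0, snd x)) \<le> c * (1 + l1norm x)"
proof -
  obtain r where r: "r > 0" "ball 0 r \<subseteq> U" using assms by (auto simp: mem_interior)
  define c where "c = 2 / r + 4"
  have c: "c > 0" using r by (simp add: c_def add_pos_pos)
  have "real (lenG U x) \<le> c * (1 + l1norm x) \<and> real (lenN U (0, snd x)) \<le> c * (1 + l1norm x)" for x
  proof -
    obtain N where lt: "l1norm x < r * real N" and Nle: "real N \<le> l1norm x / r + 2"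
      by (rule word_count[OF r(1)])
    note reach = setpow_reach[OF r(2) lt]
    have "lenG U x \<le> N + N" unfolding lenG_def using reach(2) by (rule Least_le)
    moreover have "lenN U (0, snd x) \<le> N" unfolding lenN_def using reach(1) by (rule Least_le)
    moreover have "real (N + N) \<le> (2 / r) * l1norm x + 4"
    proof -
      have "real (N + N) \<le> 2 * (l1norm x / r + 2)" using Nle by simp
      also have "\<dots> = (2 / r) * l1norm x + 4" by simp
      finally show ?thesis .
    qed
    moreover have "(2 / r) * l1norm x + 4 \<le> c * (1 + l1norm x)"
    proof -
      have "c * (1 + l1norm x) = (2 / r) * l1norm x + 4 + (2 / r + 4 * l1norm x)"
        by (simp add: c_def algebra_simps add_divide_distrib)
      then show ?thesis using l1norm_nonneg[of x] r by simp
    qed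
    ultimately show ?thesis by (simp only: of_nat_le_iff[symmetric] of_nat_add) linarith
  qed
  with c that show ?thesis by blast
qed

lemma sigma_ge_one: "1 \<le> sigma U x"
proof -
  have "1 * 1 \<le> max (onorm (Ad x)) (onorm (Ad (ginv x))) * (1 + real (lenG U x) + real (lenN U (0, snd x)))"
    using onorm_Ad_ge[of x] by (intro mult_mono) auto
  then show ?thesis by (simp add: sigma_def)
qed

lemma sigma_lower_bound:
  assumes "compact U" "0 \<in> interior U"
  obtains C where "C > 0" "\<And>x. 1 + l1norm x \<le> C * sigma U x"
proof -
  obtain B where B: "\<And>u. u \<in> U \<Longrightarrow> norm u \<le> B"
    using compact_imp_bounded[OF assms(1)] by (auto simp: bounded_iff)
  define K where "K = 3 * \<bar>B\<bar>"
  have K: "K \<ge> 0" by (simp add: K_def)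
  have K_bound: "l1norm u \<le> K" if "u \<in> U" for u
    using l1norm_le_norm[of u] B[OF that] abs_ge_self[of B] unfolding K_def by linarith
  have "1 + l1norm x \<le> (1 + 2 * K) * sigma U x" for x
  proof -
    define M where "M = max (onorm (Ad x)) (onorm (Ad (ginv x)))"
    define L where "L = 1 + real (lenG U x) + real (lenN U (0, snd x))"
    have M: "M \<ge> 1" using onorm_Ad_ge[of x] by (simp add: M_def)
    have L: "L \<ge> 1 + real (lenG U x)" by (simp add: L_def)
    have "1 + l1norm x \<le> 1 + 2 * K * real (lenG U x)"
      using setpow_l1norm[OF K_bound setpow_lenG[OF assms(2)]] by simp
    also have "\<dots> \<le> (1 + 2 * K) * (1 + real (lenG U x))"
      using K by (simp add: algebra_simps)
    also have "\<dots> \<le> (1 + 2 * K) * L"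
      using K L by (intro mult_left_mono) auto
    also have "\<dots> \<le> (1 + 2 * K) * (M * L)"
      using M L K by (intro mult_left_mono) (auto simp: mult_le_cancel_right1)
    finally show ?thesis by (simp add: sigma_def M_def L_def)
  qed
  moreover have "1 + 2 * K > 0" using K by simp
  ultimately show ?thesis using that by blast
qed

lemma sigma_upper_bound:
  assumes "0 \<in> interior U"
  obtains C where "C > 0" "\<And>x. sigma U x \<le> C * (1 + l1norm x)\<^sup>2"
proof -
  obtain c where c: "c > 0" "\<And>x. real (lenG U x) \<le> c * (1 + l1norm x)"
    "\<And>x. real (lenN U (0, snd x)) \<le> c * (1 + l1norm x)"
    by (rule word_length_bounds[OF assms]) blast
  have "sigma U x \<le> (5 * (1 + 2 * c)) * (1 + l1norm x)\<^sup>2" for x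
  proof -
    define M where "M = max (onorm (Ad x)) (onorm (Ad (ginv x)))"
    have M1: "M \<ge> 1" using onorm_Ad_ge[of x] by (simp add: M_def)
    have M5: "M \<le> 5 * (1 + l1norm x)"
      using onorm_Ad_le[of x] onorm_Ad_inv_le[of x] l1norm_nonneg[of x]
      by (simp add: M_def l1norm_def) linarith
    have L: "1 + real (lenG U x) + real (lenN U (0, snd x)) \<le> (1 + 2 * c) * (1 + l1norm x)"
      using c(2,3)[of x] l1norm_nonneg[of x] c(1) by (simp add: algebra_simps)
    have "sigma U x \<le> (5 * (1 + l1norm x)) * ((1 + 2 * c) * (1 + l1norm x))"
      unfolding sigma_def M_def[symmetric] using M5 L M1 by (intro mult_mono) auto
    then show ?thesis by (simp add: power2_eq_square algebra_simps)
  qed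
  moreover have "5 * (1 + 2 * c) > 0" using c(1) by simp
  ultimately show ?thesis using that by blast
qed

lemma monom_le_weight: "\<bar>monom (b1,b2,b3) x\<bar> \<le> (1 + l1norm x) ^ (b1 + b2 + b3)"
proof -
  obtain t n1 n2 where x: "x = (t,n1,n2)" by (cases x)
  have a: "\<bar>t\<bar> \<le> 1 + l1norm x" "\<bar>n1\<bar> \<le> 1 + l1norm x" "\<bar>n2\<bar> \<le> 1 + l1norm x"
    by (auto simp: l1norm_def x)
  have "\<bar>monom (b1,b2,b3) x\<bar> = \<bar>t\<bar>^b1 * \<bar>n1\<bar>^b2 * \<bar>n2\<bar>^b3"
    by (simp add: monom_def x abs_mult power_abs)
  also have "\<dots> \<le> (1 + l1norm x) ^ b1 * (1 + l1norm x) ^ b2 * (1 + l1norm x) ^ b3"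
    using a by (intro mult_mono power_mono) auto
  finally show ?thesis by (simp add: power_add)
qed

lemma weight_pow_le_monoms:
  "(1 + l1norm x) ^ m \<le> 4 ^ m * (\<Sum>\<gamma>\<leftarrow>[(0,0,0),(m,0,0),(0,m,0),(0,0,m)]. \<bar>monom \<gamma> x\<bar>)"
proof -
  obtain t n1 n2 where x: "x = (t,n1,n2)" by (cases x)
  define M where "M = max (max 1 \<bar>t\<bar>) (max \<bar>n1\<bar> \<bar>n2\<bar>)"
  have "1 \<le> M" "\<bar>t\<bar> \<le> M" "\<bar>n1\<bar> \<le> M" "\<bar>n2\<bar> \<le> M" by (auto simp: M_def)
  then have "1 + l1norm x \<le> 4 * M" by (simp add: l1norm_def x)
  then have "(1 + l1norm x) ^ m \<le> (4 * M) ^ m"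
    using l1norm_nonneg[of x] by (intro power_mono) auto
  also have "\<dots> = 4 ^ m * M ^ m" by (simp add: power_mult_distrib)
  also have "M ^ m \<le> 1 + \<bar>t\<bar> ^ m + \<bar>n1\<bar> ^ m + \<bar>n2\<bar> ^ m"
    by (auto simp: M_def max_def)
  then have "4 ^ m * M ^ m \<le> 4 ^ m * (1 + \<bar>t\<bar> ^ m + \<bar>n1\<bar> ^ m + \<bar>n2\<bar> ^ m)" by simp
  also have "\<dots> = 4 ^ m * (\<Sum>\<gamma>\<leftarrow>[(0,0,0),(m,0,0),(0,m,0),(0,0,m)]. \<bar>monom \<gamma> x\<bar>)"
    by (simp add: monom_def x power_abs)
  finally show ?thesis .
qed

lemma sum_list_times_sum_list:
  "(\<Sum>a\<leftarrow>A. f a) * (\<Sum>b\<leftarrow>B. g b) = (\<Sum>p\<leftarrow>List.product A B. (f (fst p) * g (snd p) :: real))"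
proof (induction A)
  case (Cons a A)
  have "(\<Sum>a\<leftarrow>a # A. f a) * (\<Sum>b\<leftarrow>B. g b) = (\<Sum>b\<leftarrow>B. f a * g b) + (\<Sum>a\<leftarrow>A. f a) * (\<Sum>b\<leftarrow>B. g b)"
    by (simp add: algebra_simps sum_list_const_mult)
  then show ?case using Cons by (simp add: o_def)
qed simp

lemma sigma_X_le_monom_pd:
  assumes "0 \<in> interior U"
  obtains D Q where "D \<ge> 0" "\<And>h x. smooth h \<Longrightarrow> sigma U x ^ k * norm (Xalpha \<alpha> h x) \<le>
      D * (\<Sum>i\<leftarrow>Q. \<bar>monom (snd i) x\<bar> * norm (pdalpha (fst i) h x))"
proof -
  obtain C2 where C2: "C2 > 0" "\<And>x. sigma U x \<le> C2 * (1 + l1norm x)\<^sup>2"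
    by (rule sigma_upper_bound[OF assms]) blast
  obtain L C where L: "C \<ge> 0" "\<And>\<phi> x. smooth \<phi> \<Longrightarrow> norm (Xalpha \<alpha> \<phi> x) \<le> C * (\<Sum>\<beta>\<leftarrow>L. norm (pdalpha \<beta> \<phi> x))"
    using Xalpha_dominated[of \<alpha>] unfolding dominated_def by blast
  define G where "G = [(0::nat,0::nat,0::nat),(2*k,0,0),(0,2*k,0),(0,0,2*k)]"
  define D where "D = C2 ^ k * 4 ^ (2*k) * C"
  have D: "D \<ge> 0" using C2(1) L(1) by (simp add: D_def)
  have bound: "sigma U x ^ k * norm (Xalpha \<alpha> h x) \<le>
      D * (\<Sum>i\<leftarrow>List.product L G. \<bar>monom (snd i) x\<bar> * norm (pdalpha (fst i) h x))"
    if h: "smooth h" for h x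
  proof -
    have s0: "0 \<le> sigma U x" using sigma_ge_one[of U x] by linarith
    have "sigma U x ^ k \<le> (C2 * (1 + l1norm x)\<^sup>2) ^ k"
      using C2(2)[of x] s0 by (intro power_mono) auto
    also have "\<dots> = C2 ^ k * (1 + l1norm x) ^ (2 * k)" by (simp add: power_mult_distrib power_mult)
    also have "\<dots> \<le> C2 ^ k * (4 ^ (2*k) * (\<Sum>\<gamma>\<leftarrow>G. \<bar>monom \<gamma> x\<bar>))"
      using C2(1) unfolding G_def by (intro mult_left_mono weight_pow_le_monoms) auto
    finally have a: "sigma U x ^ k \<le> C2 ^ k * 4 ^ (2*k) * (\<Sum>\<gamma>\<leftarrow>G. \<bar>monom \<gamma> x\<bar>)"
      by (simp add: mult.assoc)
    have "sigma U x ^ k * norm (Xalpha \<alpha> h x)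
        \<le> (C2 ^ k * 4 ^ (2*k) * (\<Sum>\<gamma>\<leftarrow>G. \<bar>monom \<gamma> x\<bar>)) * (C * (\<Sum>\<beta>\<leftarrow>L. norm (pdalpha \<beta> h x)))"
      by (rule mult_mono[OF a L(2)[OF h]]) (use C2(1) in \<open>auto intro!: mult_nonneg_nonneg sum_list_nonneg\<close>)
    also have "\<dots> = D * ((\<Sum>\<beta>\<leftarrow>L. norm (pdalpha \<beta> h x)) * (\<Sum>\<gamma>\<leftarrow>G. \<bar>monom \<gamma> x\<bar>))"
      by (simp add: D_def algebra_simps)
    also have "(\<Sum>\<beta>\<leftarrow>L. norm (pdalpha \<beta> h x)) * (\<Sum>\<gamma>\<leftarrow>G. \<bar>monom \<gamma> x\<bar>) =
        (\<Sum>i\<leftarrow>List.product L G. norm (pdalpha (fst i) h x) * \<bar>monom (snd i) x\<bar>)"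
      by (rule sum_list_times_sum_list)
    also have "\<dots> = (\<Sum>i\<leftarrow>List.product L G. \<bar>monom (snd i) x\<bar> * norm (pdalpha (fst i) h x))"
      by (simp add: mult.commute)
    finally show ?thesis .
  qed
  show ?thesis by (rule that[OF D bound])
qed

lemma monom_pd_le_sigma_X:
  assumes "compact U" "0 \<in> interior U"
  obtains D Q where "D \<ge> 0" "\<And>h x. smooth h \<Longrightarrow> \<bar>monom \<gamma> x\<bar> * norm (pdalpha \<beta> h x) \<le>
      D * (\<Sum>i\<leftarrow>Q. sigma U x ^ fst i * norm (Xalpha (snd i) h x))"
proof -
  obtain C1 where C1: "C1 > 0" "\<And>x. 1 + l1norm x \<le> C1 * sigma U x"
    by (rule sigma_lower_bound[OF assms]) blast
  obtain L C where L: "C \<ge> 0" "\<And>\<phi> x. smooth \<phi> \<Longrightarrow> norm (pdalpha \<beta> \<phi> x) \<le> C * (\<Sum>\<alpha>\<leftarrow>L. norm (Xalpha \<alpha> \<phi> x))"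
    using pdalpha_dominated[of \<beta>] unfolding dominated_def by blast
  obtain g1 g2 g3 where \<gamma>: "\<gamma> = (g1,g2,g3)" by (cases \<gamma>)
  define m where "m = g1 + g2 + g3"
  define D where "D = C1 ^ m * C"
  have D: "D \<ge> 0" using C1(1) L(1) by (simp add: D_def)
  have bound: "\<bar>monom \<gamma> x\<bar> * norm (pdalpha \<beta> h x) \<le>
      D * (\<Sum>i\<leftarrow>map (\<lambda>\<alpha>. (m,\<alpha>)) L. sigma U x ^ fst i * norm (Xalpha (snd i) h x))"
    if h: "smooth h" for h x
  proof -
    have "\<bar>monom \<gamma> x\<bar> \<le> (1 + l1norm x) ^ m" using monom_le_weight by (simp add: \<gamma> m_def)
    also have "\<dots> \<le> (C1 * sigma U x) ^ m"
      using C1(2)[of x] l1norm_nonneg[of x] by (intro power_mono) auto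
    finally have a: "\<bar>monom \<gamma> x\<bar> \<le> C1 ^ m * sigma U x ^ m" by (simp add: power_mult_distrib)
    have "\<bar>monom \<gamma> x\<bar> * norm (pdalpha \<beta> h x) \<le> (C1 ^ m * sigma U x ^ m) * (C * (\<Sum>\<alpha>\<leftarrow>L. norm (Xalpha \<alpha> h x)))"
      by (rule mult_mono[OF a L(2)[OF h]]) (use C1(1) sigma_ge_one[of U x] in auto)
    also have "\<dots> = D * (\<Sum>\<alpha>\<leftarrow>L. sigma U x ^ m * norm (Xalpha \<alpha> h x))"
      by (simp add: D_def algebra_simps sum_list_const_mult)
    finally show ?thesis by (simp add: o_def)
  qed
  show ?thesis by (rule that[OF D bound])
qed

lemma SUP_dominated:
  fixes f :: "'x \<Rightarrow> real" and g :: "'i \<Rightarrow> 'x \<Rightarrow> real"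
  assumes dom: "\<And>x. f x \<le> D * (\<Sum>i\<leftarrow>L. g i x)" and D: "D \<ge> 0"
    and bdd: "\<And>i. i \<in> set L \<Longrightarrow> bdd_above (range (g i))"
  shows "bdd_above (range f) \<and> (SUP x. f x) \<le> D * (\<Sum>i\<leftarrow>L. (SUP x. g i x))"
proof -
  have le: "f x \<le> D * (\<Sum>i\<leftarrow>L. (SUP x. g i x))" for x
  proof -
    have "(\<Sum>i\<leftarrow>L. g i x) \<le> (\<Sum>i\<leftarrow>L. (SUP x. g i x))"
      by (rule sum_list_mono) (use bdd in \<open>auto intro: cSUP_upper\<close>)
    then show ?thesis using dom[of x] D by (meson mult_left_mono order_trans)
  qed
  show ?thesis
  proof
    show "bdd_above (range f)" by (rule bdd_aboveI2, rule le)
    show "(SUP x. f x) \<le> D * (\<Sum>i\<leftarrow>L. (SUP x. g i x))" using le by (auto intro: cSUP_least)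
  qed
qed

lemma SUP_dominated_family:
  fixes F :: "'f \<Rightarrow> 'x \<Rightarrow> real" and G :: "'i \<Rightarrow> 'f \<Rightarrow> 'x \<Rightarrow> real"
  assumes D: "D \<ge> 0" and dom: "\<And>h y. h \<in> S \<Longrightarrow> F h y \<le> D * (\<Sum>i\<leftarrow>Q. G i h y)"
    and bdd: "\<And>i h. h \<in> S \<Longrightarrow> bdd_above (range (G i h))"
  shows "\<forall>h\<in>S. bdd_above (range (F h)) \<and>
    (SUP y. F h y) \<le> D * (\<Sum>q\<leftarrow>map (\<lambda>i h. SUP y. G i h y) Q. q h)"
proof
  fix h assume h: "h \<in> S"
  have "bdd_above (range (F h)) \<and> (SUP y. F h y) \<le> D * (\<Sum>i\<leftarrow>Q. SUP y. G i h y)"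
    by (rule SUP_dominated[where f = "F h" and g = "\<lambda>i. G i h"]) (use dom bdd h D in auto)
  then show "bdd_above (range (F h)) \<and> (SUP y. F h y) \<le> D * (\<Sum>q\<leftarrow>map (\<lambda>i h. SUP y. G i h y) Q. q h)"
    by (simp add: o_def)
qed

lemma Schwartz_iff:
  "f \<in> Schwartz \<longleftrightarrow> smooth f \<and> (\<forall>\<alpha> \<beta>. bdd_above (range (\<lambda>x. \<bar>monom \<beta> x\<bar> * norm (pdalpha \<alpha> f x))))"
  unfolding Schwartz_def by (rule mem_Collect_eq)

lemma Ssigma_iff:
  "f \<in> Ssigma U \<longleftrightarrow> smooth f \<and> (\<forall>k \<alpha>. bdd_above (range (\<lambda>x. sigma U x ^ k * norm (Xalpha \<alpha> f x))))"
  unfolding Ssigma_def by (rule mem_Collect_eq)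

lemma Schwartz_bdd:
  assumes "f \<in> Schwartz"
  shows "bdd_above (range (\<lambda>x. \<bar>monom \<beta> x\<bar> * norm (pdalpha \<alpha> f x)))"
  using assms unfolding Schwartz_iff by (elim conjE allE)

lemma Ssigma_bdd:
  assumes "f \<in> Ssigma U"
  shows "bdd_above (range (\<lambda>x. sigma U x ^ k * norm (Xalpha \<alpha> f x)))"
  using assms unfolding Ssigma_iff by (elim conjE allE)

lemma sigma_seminorm_bound:
  assumes "0 \<in> interior U"
  shows "\<exists>D qs. D \<ge> 0 \<and> set qs \<subseteq> schwartz_seminorms \<and> (\<forall>h\<in>Schwartz.
    bdd_above (range (\<lambda>x. sigma U x ^ k * norm (Xalpha \<alpha> h x))) \<and>
    (SUP x. sigma U x ^ k * norm (Xalpha \<alpha> h x)) \<le> D * (\<Sum>q\<leftarrow>qs. q h))"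
proof -
  obtain D Q where D: "D \<ge> 0" and dom: "\<And>h x. smooth h \<Longrightarrow> sigma U x ^ k * norm (Xalpha \<alpha> h x) \<le>
      D * (\<Sum>i\<leftarrow>Q. \<bar>monom (snd i) x\<bar> * norm (pdalpha (fst i) h x))"
    by (rule sigma_X_le_monom_pd[OF assms]) blast
  have "(\<lambda>f. SUP x. \<bar>monom \<gamma> x\<bar> * norm (pdalpha \<beta> f x)) \<in> schwartz_seminorms" for \<beta> \<gamma>
    unfolding schwartz_seminorms_def by blast
  then have qs: "set (map (\<lambda>i f. SUP x. \<bar>monom (snd i) x\<bar> * norm (pdalpha (fst i) f x)) Q) \<subseteq> schwartz_seminorms"
    by auto
  have bound: "\<forall>h\<in>Schwartz. bdd_above (range (\<lambda>x. sigma U x ^ k * norm (Xalpha \<alpha> h x))) \<and>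
      (SUP x. sigma U x ^ k * norm (Xalpha \<alpha> h x))
        \<le> D * (\<Sum>q\<leftarrow>map (\<lambda>i f. SUP x. \<bar>monom (snd i) x\<bar> * norm (pdalpha (fst i) f x)) Q. q h)"
    by (rule SUP_dominated_family[OF D]) (auto simp: Schwartz_iff intro: dom Schwartz_bdd)
  show ?thesis using D qs bound by (intro exI conjI) assumption+
qed

lemma schwartz_seminorm_bound:
  assumes "compact U" "0 \<in> interior U"
  shows "\<exists>D ps. D \<ge> 0 \<and> set ps \<subseteq> sigma_seminorms U \<and> (\<forall>h\<in>Ssigma U.
    bdd_above (range (\<lambda>x. \<bar>monom \<gamma> x\<bar> * norm (pdalpha \<beta> h x))) \<and>
    (SUP x. \<bar>monom \<gamma> x\<bar> * norm (pdalpha \<beta> h x)) \<le> D * (\<Sum>p\<leftarrow>ps. p h))"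
proof -
  obtain D Q where D: "D \<ge> 0" and dom: "\<And>h x. smooth h \<Longrightarrow> \<bar>monom \<gamma> x\<bar> * norm (pdalpha \<beta> h x) \<le>
      D * (\<Sum>i\<leftarrow>Q. sigma U x ^ fst i * norm (Xalpha (snd i) h x))"
    by (rule monom_pd_le_sigma_X[OF assms]) blast
  have "(\<lambda>f. SUP x. sigma U x ^ k * norm (Xalpha \<alpha> f x)) \<in> sigma_seminorms U" for k \<alpha>
    unfolding sigma_seminorms_def by blast
  then have ps: "set (map (\<lambda>i f. SUP x. sigma U x ^ fst i * norm (Xalpha (snd i) f x)) Q) \<subseteq> sigma_seminorms U"
    by auto
  have bound: "\<forall>h\<in>Ssigma U. bdd_above (range (\<lambda>x. \<bar>monom \<gamma> x\<bar> * norm (pdalpha \<beta> h x))) \<and>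
      (SUP x. \<bar>monom \<gamma> x\<bar> * norm (pdalpha \<beta> h x))
        \<le> D * (\<Sum>q\<leftarrow>map (\<lambda>i f. SUP x. sigma U x ^ fst i * norm (Xalpha (snd i) f x)) Q. q h)"
    by (rule SUP_dominated_family[OF D]) (auto simp: Ssigma_iff intro: dom Ssigma_bdd)
  show ?thesis using D ps bound by (intro exI conjI) assumption+
qed

lemma Ssigma_eq_Schwartz:
  assumes "compact U" "0 \<in> interior U"
  shows "Ssigma U = Schwartz"
proof (intro set_eqI iffI)
  fix \<phi> assume \<phi>: "\<phi> \<in> Ssigma U"
  have "bdd_above (range (\<lambda>x. \<bar>monom \<gamma> x\<bar> * norm (pdalpha \<beta> \<phi> x)))" for \<beta> \<gamma>
    using schwartz_seminorm_bound[OF assms, of \<gamma> \<beta>] \<phi> by auto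
  moreover have "smooth \<phi>" using \<phi> by (simp add: Ssigma_iff)
  ultimately show "\<phi> \<in> Schwartz" by (simp add: Schwartz_iff)
next
  fix \<phi> assume \<phi>: "\<phi> \<in> Schwartz"
  have "bdd_above (range (\<lambda>x. sigma U x ^ k * norm (Xalpha \<alpha> \<phi> x)))" for k \<alpha>
    using sigma_seminorm_bound[OF assms(2), of k \<alpha>] \<phi> by auto
  moreover have "smooth \<phi>" using \<phi> by (simp add: Schwartz_iff)
  ultimately show "\<phi> \<in> Ssigma U" by (simp add: Ssigma_iff)
qed

lemma pds_diff:
  assumes g: "smooth g" and f: "smooth f" and w: "set w \<subseteq> {0,1,2}"
  shows "pds w (\<lambda>x. g x - f x) = (\<lambda>x. pds w g x - pds w f x)"
  using w
proof (induction w)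
  case (Cons i w)
  then have IH: "pds w (\<lambda>x. g x - f x) = (\<lambda>x. pds w g x - pds w f x)" and i: "i \<in> {0,1,2}"
    and w: "set w \<subseteq> {0,1,2}" by auto
  have "pd i (\<lambda>x. pds w g x - pds w f x) x = pds (i # w) g x - pds (i # w) f x" for x
    using pd_diff[OF smooth_differentiable[OF pds_smooth[OF g w] i] smooth_differentiable[OF pds_smooth[OF f w] i]]
    by simp
  with IH show ?case by auto
qed simp

lemma smooth_diff:
  assumes g: "smooth g" and f: "smooth f"
  shows "smooth (\<lambda>x. g x - f x)"
  unfolding smooth_def
proof (intro allI impI)
  fix w :: "nat list" assume w: "set w \<subseteq> {0,1,2}"
  show "continuous_on UNIV (pds w (\<lambda>x. g x - f x)) \<and>
      (\<forall>i\<in>{0,1,2}. \<forall>x. (\<lambda>h. pds w (\<lambda>x. g x - f x) (x + h *\<^sub>R ev i)) differentiable (at 0))"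
    unfolding pds_diff[OF g f w] using smooth_pds[OF g w] smooth_pds[OF f w]
    by (auto intro: continuous_on_diff differentiable_diff)
qed

lemma bdd_above_range_sum_dominated:
  fixes f g h :: "'a \<Rightarrow> real"
  assumes "bdd_above (range f)" "bdd_above (range g)" "\<And>x. h x \<le> f x + g x"
  shows "bdd_above (range h)"
proof -
  obtain Mf Mg where Mf: "\<And>x. f x \<le> Mf" and Mg: "\<And>x. g x \<le> Mg"
    using assms(1,2) unfolding bdd_above_def by auto
  have "h x \<le> Mf + Mg" for x using assms(3)[of x] add_mono[OF Mf[of x] Mg[of x]] by linarith
  then show ?thesis by (rule bdd_aboveI2)
qed

lemma Schwartz_diff:
  assumes g: "g \<in> Schwartz" and f: "f \<in> Schwartz"
  shows "(\<lambda>x. g x - f x) \<in> Schwartz"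
proof -
  have sg: "smooth g" and sf: "smooth f" using g f by (simp_all add: Schwartz_iff)
  have "bdd_above (range (\<lambda>x. \<bar>monom \<beta> x\<bar> * norm (pdalpha \<alpha> (\<lambda>x. g x - f x) x)))" for \<alpha> \<beta>
  proof -
    obtain a b c where \<alpha>: "\<alpha> = (a,b,c)" by (cases \<alpha>)
    have w: "set (replicate a 0 @ replicate b 1 @ replicate c (2::nat)) \<subseteq> {0,1,2}"
      by (auto simp: set_replicate_conv_if)
    have diff: "pdalpha \<alpha> (\<lambda>x. g x - f x) x = pdalpha \<alpha> g x - pdalpha \<alpha> f x" for x
      unfolding \<alpha> pdalpha_pds pds_diff[OF sg sf w] ..
    have "\<bar>monom \<beta> x\<bar> * norm (pdalpha \<alpha> (\<lambda>x. g x - f x) x)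
        \<le> \<bar>monom \<beta> x\<bar> * norm (pdalpha \<alpha> g x) + \<bar>monom \<beta> x\<bar> * norm (pdalpha \<alpha> f x)" for x
      unfolding diff distrib_left[symmetric] by (intro mult_left_mono norm_triangle_ineq4) simp
    with Schwartz_bdd[OF g] Schwartz_bdd[OF f] show ?thesis
      by (rule bdd_above_range_sum_dominated)
  qed
  with smooth_diff[OF sg sf] show ?thesis by (simp add: Schwartz_iff)
qed

section \<open>Topologies generated by equivalent families of seminorms\<close>

definition seminorms_dominated ::
    "('a \<Rightarrow> 'b) set \<Rightarrow> (('a \<Rightarrow> 'b) \<Rightarrow> real) set \<Rightarrow> (('a \<Rightarrow> 'b) \<Rightarrow> real) set \<Rightarrow> bool" where
  "seminorms_dominated S P Q \<longleftrightarrow>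
     (\<forall>p\<in>P. \<exists>D qs. D \<ge> 0 \<and> set qs \<subseteq> Q \<and> (\<forall>h\<in>S. p h \<le> D * (\<Sum>q\<leftarrow>qs. q h)))"

lemma seminorms_dominated_finite:
  assumes dom: "seminorms_dominated S P Q" and F: "finite F" "F \<subseteq> P"
  obtains F' C where "finite F'" "F' \<subseteq> Q" "C \<ge> 0"
    "\<And>p h e. p \<in> F \<Longrightarrow> h \<in> S \<Longrightarrow> e \<ge> 0 \<Longrightarrow> (\<And>q. q \<in> F' \<Longrightarrow> q h \<le> e) \<Longrightarrow> p h \<le> C * e"
proof -
  have "\<exists>Dq. fst Dq \<ge> 0 \<and> set (snd Dq) \<subseteq> Q \<and> (\<forall>h\<in>S. p h \<le> fst Dq * (\<Sum>q\<leftarrow>snd Dq. q h))"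
    if "p \<in> F" for p
  proof -
    have "p \<in> P" using that F(2) by blast
    then obtain D qs where "D \<ge> 0 \<and> set qs \<subseteq> Q \<and> (\<forall>h\<in>S. p h \<le> D * (\<Sum>q\<leftarrow>qs. q h))"
      using dom unfolding seminorms_dominated_def by blast
    then show ?thesis by (intro exI[of _ "(D, qs)"]) simp
  qed
  then obtain c where c: "\<And>p. p \<in> F \<Longrightarrow> fst (c p) \<ge> 0 \<and> set (snd (c p)) \<subseteq> Q \<and>
      (\<forall>h\<in>S. p h \<le> fst (c p) * (\<Sum>q\<leftarrow>snd (c p). q h))"
    by (metis bchoice[rule_format])
  define F' where "F' = (\<Union>p\<in>F. set (snd (c p)))"
  define C where "C = (\<Sum>p\<in>F. fst (c p) * real (length (snd (c p))))"
  have "p h \<le> C * e" if p: "p \<in> F" and h: "h \<in> S" and e: "e \<ge> 0" and small: "\<And>q. q \<in> F' \<Longrightarrow> q h \<le> e"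
    for p h e
  proof -
    have "(\<Sum>q\<leftarrow>snd (c p). q h) \<le> (\<Sum>q\<leftarrow>snd (c p). e)"
      by (rule sum_list_mono) (use small p in \<open>auto simp: F'_def\<close>)
    also have "\<dots> = real (length (snd (c p))) * e" by (simp add: sum_list_triv)
    finally have sum_le: "(\<Sum>q\<leftarrow>snd (c p). q h) \<le> real (length (snd (c p))) * e" .
    have "p h \<le> fst (c p) * (\<Sum>q\<leftarrow>snd (c p). q h)" using c[OF p] h by blast
    also have "\<dots> \<le> fst (c p) * (real (length (snd (c p))) * e)"
      using sum_le c[OF p] by (intro mult_left_mono) auto
    also have "\<dots> \<le> C * e"
      unfolding mult.assoc[symmetric] C_def using F(1) p c e
      by (intro mult_right_mono member_le_sum) auto
    finally show ?thesis .
  qed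
  moreover have "finite F'" "F' \<subseteq> Q" using F(1) c by (auto simp: F'_def)
  moreover have "C \<ge> 0" unfolding C_def using c by (auto intro!: sum_nonneg)
  ultimately show ?thesis using that by blast
qed

lemma seminorm_open_dominated:
  assumes diff: "\<And>f g. f \<in> S \<Longrightarrow> g \<in> S \<Longrightarrow> (\<lambda>x. g x - f x) \<in> S"
    and dom: "seminorms_dominated S P Q" and V: "seminorm_open S P V"
  shows "seminorm_open S Q V"
  unfolding seminorm_open_def
proof (intro conjI ballI)
  show VS: "V \<subseteq> S" using V by (simp add: seminorm_open_def)
  fix f assume "f \<in> V"
  then have fS: "f \<in> S" using VS by blast
  obtain F \<epsilon> where F: "finite F" "F \<subseteq> P" "\<epsilon> > 0" "{g \<in> S. \<forall>p \<in> F. p (\<lambda>x. g x - f x) < \<epsilon>} \<subseteq> V"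
    using V \<open>f \<in> V\<close> unfolding seminorm_open_def by blast
  obtain F' C where F': "finite F'" "F' \<subseteq> Q" "C \<ge> 0"
    "\<And>p h e. p \<in> F \<Longrightarrow> h \<in> S \<Longrightarrow> e \<ge> 0 \<Longrightarrow> (\<And>q. q \<in> F' \<Longrightarrow> q h \<le> e) \<Longrightarrow> p h \<le> C * e"
    by (rule seminorms_dominated_finite[OF dom F(1,2)]) blast
  define \<epsilon>' where "\<epsilon>' = \<epsilon> / (1 + C)"
  have \<epsilon>': "\<epsilon>' > 0" "C * \<epsilon>' < \<epsilon>"
    using F(3) F'(3) by (simp_all add: \<epsilon>'_def field_simps)
  have "{g \<in> S. \<forall>q \<in> F'. q (\<lambda>x. g x - f x) < \<epsilon>'} \<subseteq> V"
  proof (rule subsetI, rule F(4)[THEN subsetD], safe)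
    fix g p assume g: "g \<in> S" "\<forall>q\<in>F'. q (\<lambda>x. g x - f x) < \<epsilon>'" and p: "p \<in> F"
    have "p (\<lambda>x. g x - f x) \<le> C * \<epsilon>'"
      using g by (intro F'(4)[OF p diff[OF fS g(1)]]) (auto intro: less_imp_le \<epsilon>')
    then show "p (\<lambda>x. g x - f x) < \<epsilon>" using \<epsilon>'(2) by linarith
  qed
  then show "\<exists>F \<epsilon>. finite F \<and> F \<subseteq> Q \<and> \<epsilon> > 0 \<and> {g \<in> S. \<forall>p \<in> F. p (\<lambda>x. g x - f x) < \<epsilon>} \<subseteq> V"
    using F'(1,2) \<epsilon>'(1) by blast
qed

lemma seminorm_topology_eq:
  assumes "\<And>f g. f \<in> S \<Longrightarrow> g \<in> S \<Longrightarrow> (\<lambda>x. g x - f x) \<in> S"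
    and "seminorms_dominated S P Q" "seminorms_dominated S Q P"
  shows "seminorm_topology S P = seminorm_topology S Q"
proof -
  have "seminorm_open S P = seminorm_open S Q"
    using seminorm_open_dominated[OF assms(1,2)] seminorm_open_dominated[OF assms(1,3)] by blast
  then show ?thesis by (simp add: seminorm_topology_def)
qed

lemma sigma_seminorms_dominated:
  assumes "0 \<in> interior U"
  shows "seminorms_dominated Schwartz (sigma_seminorms U) schwartz_seminorms"
  unfolding seminorms_dominated_def sigma_seminorms_def
  using sigma_seminorm_bound[OF assms] by fastforce

lemma schwartz_seminorms_dominated:
  assumes "compact U" "0 \<in> interior U"
  shows "seminorms_dominated (Ssigma U) schwartz_seminorms (sigma_seminorms U)"
  unfolding seminorms_dominated_def schwartz_seminorms_def
  using schwartz_seminorm_bound[OF assms] by fastforce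

theorem proposition5p3:
  fixes U :: "(real \<times> real \<times> real) set"
  assumes "compact U"
    and "0 \<in> interior U"
    and "\<forall>g \<in> U. ginv g \<in> U"
  shows "Ssigma U = Schwartz \<and>
    seminorm_topology (Ssigma U) (sigma_seminorms U) =
    seminorm_topology Schwartz schwartz_seminorms"
proof -
  have eq: "Ssigma U = Schwartz"
    by (rule Ssigma_eq_Schwartz[OF assms(1,2)])
  have "seminorm_topology Schwartz (sigma_seminorms U) = seminorm_topology Schwartz schwartz_seminorms"
    using sigma_seminorms_dominated[OF assms(2)] schwartz_seminorms_dominated[OF assms(1,2)]
    by (intro seminorm_topology_eq Schwartz_diff) (simp_all add: eq)
  with eq show ?thesis by simp
qed

end
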